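(* Let $w\in\tilde S_n$. (1) If $[m_\lambda]\tilde F_w\ne0$ then $\lambda\preceq\lambda(w)$. (2) $[m_{\lambda(w)}]\tilde F_w=1$.
   Context: $\tilde S_n$ ($n>2$) is realized as bijections $w:\mathbb Z\to\mathbb Z$ with $w(i+n)=w(i)+n$ and $\sum_{i=1}^n w(i)=\sum_{i=1}^n i$, generated by $s_0,\ldots,s_{n-1}$. $\tilde F_w=\sum x_1^{\ell(v_1)}x_2^{\ell(v_2)}\cdots$ over infinite sequences of cyclically decreasing elements (having a reduced word in which each letter of $\mathbb Z/n\mathbb Z$ occurs at most once and $i+1$ precedes $i$ whenever both occur), all but finitely many the identity, with $v_1v_2\cdots=w$ and $\sum\ell(v_i)=\ell(w)$. The code of $u$ is $c(u)=(c_1,\ldots,c_n)$, $c_i=\#\{j\in\mathbb Z: j>i,\ u(j)<u(i)\}$; $\lambda(w)$ is the partition conjugate to the sorted (decreasing) rearrangement of $c(w^{-1})$. $[m_\lambda]f$ is the coefficient of the monomial symmetric function $m_\lambda$ in $f$. For partitions of equal size, $\lambda\preceq\mu$ means $\lambda=\mu$ or there is $k>0$ with $\lambda_1+\cdots+\lambda_j=\mu_1+\cdots+\mu_j$ for $j<k$ and $\lambda_1+\cdots+\lambda_k<\mu_1+\cdots+\mu_k$. *)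

theory Defs
  imports Main
begin

definition affine_perm :: "nat \<Rightarrow> (int \<Rightarrow> int) \<Rightarrow> bool" where
  "affine_perm n w \<longleftrightarrow> bij w \<and> (\<forall>i. w (i + int n) = w i + int n)
     \<and> (\<Sum>i\<in>{1..int n}. w i) = (\<Sum>i\<in>{1..int n}. i)"

definition s_gen :: "nat \<Rightarrow> nat \<Rightarrow> int \<Rightarrow> int" where
  "s_gen n k j = (if j mod int n = int k mod int n then j + 1
                  else if j mod int n = (int k + 1) mod int n then j - 1 else j)"

definition word_prod :: "nat \<Rightarrow> nat list \<Rightarrow> int \<Rightarrow> int" where
  "word_prod n ws = foldr (\<lambda>a f. s_gen n a \<circ> f) ws id"

definition aff_length :: "nat \<Rightarrow> (int \<Rightarrow> int) \<Rightarrow> nat" where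
  "aff_length n w = (LEAST k. \<exists>ws. length ws = k \<and> set ws \<subseteq> {..<n} \<and> word_prod n ws = w)"

definition reduced_word :: "nat \<Rightarrow> nat list \<Rightarrow> (int \<Rightarrow> int) \<Rightarrow> bool" where
  "reduced_word n ws w \<longleftrightarrow> set ws \<subseteq> {..<n} \<and> word_prod n ws = w \<and> length ws = aff_length n w"

definition cyc_dec :: "nat \<Rightarrow> (int \<Rightarrow> int) \<Rightarrow> bool" where
  "cyc_dec n v \<longleftrightarrow> (\<exists>ws. reduced_word n ws v \<and> distinct ws \<and>
     (\<forall>i p q. i < n \<and> p < length ws \<and> q < length ws \<and> ws ! p = (i + 1) mod n \<and> ws ! q = i
        \<longrightarrow> p < q))"

text \<open>Coefficient of the monomial x_1^{a_1} ... x_k^{a_k} in the affine Stanley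
  symmetric function F_w: number of length-additive factorisations w = v_1 ... v_k into
  cyclically decreasing elements with l(v_i) = a_i (the remaining v_i are the identity).\<close>
definition aff_stanley_monomial_coeff :: "nat \<Rightarrow> (int \<Rightarrow> int) \<Rightarrow> nat list \<Rightarrow> nat" where
  "aff_stanley_monomial_coeff n w \<alpha> = card {vs. length vs = length \<alpha> \<and>
     (\<forall>i<length vs. cyc_dec n (vs ! i) \<and> aff_length n (vs ! i) = \<alpha> ! i) \<and>
     foldr (\<circ>) vs id = w \<and> (\<Sum>v\<leftarrow>vs. aff_length n v) = aff_length n w}"

text \<open>[m_lambda] F_w for a partition lambda (F_w is symmetric, so this is the
  coefficient of x^lambda).\<close>
definition m_coeff :: "nat \<Rightarrow> (int \<Rightarrow> int) \<Rightarrow> nat list \<Rightarrow> nat" where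
  "m_coeff n w la = aff_stanley_monomial_coeff n w la"

definition is_partition :: "nat list \<Rightarrow> bool" where
  "is_partition la \<longleftrightarrow> sorted_wrt (\<ge>) la \<and> 0 \<notin> set la"

definition aff_code :: "nat \<Rightarrow> (int \<Rightarrow> int) \<Rightarrow> nat list" where
  "aff_code n u = map (\<lambda>i. card {j::int. j > i \<and> u j < u i}) [1..int n]"

definition conj_part :: "nat list \<Rightarrow> nat list" where
  "conj_part \<mu> = map (\<lambda>j. length (filter (\<lambda>x. j \<le> x) \<mu>)) [1..<Suc (foldr max \<mu> 0)]"

definition lam :: "nat \<Rightarrow> (int \<Rightarrow> int) \<Rightarrow> nat list" where
  "lam n w = conj_part (rev (sort (aff_code n (inv w))))"

definition part_prec :: "nat list \<Rightarrow> nat list \<Rightarrow> bool" where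
  "part_prec la \<mu> \<longleftrightarrow> la = \<mu> \<or> (\<exists>k>0. (\<forall>j<k. sum_list (take j la) = sum_list (take j \<mu>))
       \<and> sum_list (take k la) < sum_list (take k \<mu>))"

end

theory Submission
  imports Defs "HOL-Library.Multiset"
begin

text \<open>Everything is read off the code \<open>c\<close> of \<open>w\<^sup>-\<^sup>1\<close>. Multiplying \<open>w\<close> on the left by a generator
  swaps two cyclically adjacent entries of \<open>c\<close> and adds or removes one, so \<open>l(w) = \<Sum> c\<close>. If
  \<open>w = v y\<close> with \<open>v\<close> cyclically decreasing and lengths adding, the code of \<open>w\<^sup>-\<^sup>1\<close> is a rearrangement
  of that of \<open>y\<^sup>-\<^sup>1\<close> plus one at each of the \<open>l(v)\<close> letters of \<open>v\<close>. Hence along any factorization of shape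
  \<open>\<alpha>\<close> the partial sums \<open>\<alpha>\<^sub>1 + \<dots> + \<alpha>\<^sub>j\<close> are bounded by \<open>\<Sum>\<^sub>p min c\<^sub>p j\<close>, the partial sums of the
  conjugate \<open>\<lambda>(w)\<close> of the sorted code; this is the dominance. A factor of length \<open>\<lambda>(w)\<^sub>1\<close>, the number
  of nonzero entries of \<open>c\<close>, must use exactly the support of \<open>c\<close> as its letters, and a cyclically
  decreasing element is determined by its letters, so the first factor is forced; conversely, peeling
  the support off in a suitable cyclic order is length-additive and lowers every nonzero entry by one,
  which removes the first part of \<open>\<lambda>(w)\<close>. Induction on the length gives exactly one factorization
  of shape \<open>\<lambda>(w)\<close>.\<close>

section \<open>Generators and periodic permutations\<close>

lemma add_one_mod_neq: "n > (1::nat) \<Longrightarrow> (x + 1) mod int n \<noteq> x mod int n"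
proof
  assume "n > 1" "(x + 1) mod int n = x mod int n"
  then have "int n dvd (x + 1) - x" by (metis mod_eq_dvd_iff)
  then show False using \<open>n > 1\<close> by auto
qed

lemma add_two_mod_neq:
  assumes "n > 2"
  shows "(x + 2) mod int n \<noteq> x mod int n" "(x + 2) mod int n \<noteq> (x + 1) mod int n"
proof -
  show "(x + 2) mod int n \<noteq> x mod int n"
  proof
    assume "(x + 2) mod int n = x mod int n"
    then have "int n dvd (x + 2) - x" by (simp add: mod_eq_dvd_iff)
    then have "int n dvd 2" by simp
    then show False using assms by (auto dest: zdvd_imp_le)
  qed
  show "(x + 2) mod int n \<noteq> (x + 1) mod int n"
    using add_one_mod_neq[of n "x + 1"] assms by (simp add: add.assoc)
qed

lemma s_gen_at_left: "j mod int n = int k mod int n \<Longrightarrow> s_gen n k j = j + 1"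
  by (simp add: s_gen_def)

lemma s_gen_at_right: "n > 1 \<Longrightarrow> j mod int n = (int k + 1) mod int n \<Longrightarrow> s_gen n k j = j - 1"
  unfolding s_gen_def using add_one_mod_neq[of n "int k"] by auto

lemma s_gen_fixed:
  "j mod int n \<noteq> int k mod int n \<Longrightarrow> j mod int n \<noteq> (int k + 1) mod int n \<Longrightarrow> s_gen n k j = j"
  by (simp add: s_gen_def)

lemma s_gen_eq_of_bool:
  assumes "n > 1"
  shows "s_gen n k j = j + of_bool (j mod int n = int k mod int n)
                        - of_bool (j mod int n = (int k + 1) mod int n)"
  using s_gen_at_left s_gen_at_right[OF assms] s_gen_fixed add_one_mod_neq[OF assms, of "int k"]
  by (cases "j mod int n = int k mod int n"; cases "j mod int n = (int k + 1) mod int n") auto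

lemma s_gen_cases:
  assumes "n > 1"
  shows "(s_gen n a j = j + 1 \<and> j mod int n = int a mod int n)
       \<or> (s_gen n a j = j - 1 \<and> j mod int n = (int a + 1) mod int n)
       \<or> (s_gen n a j = j \<and> j mod int n \<noteq> int a mod int n \<and> j mod int n \<noteq> (int a + 1) mod int n)"
  using s_gen_eq_of_bool[OF assms, of a j] add_one_mod_neq[OF assms, of "int a"] by auto

lemma s_gen_s_gen:
  assumes "n > 1"
  shows "s_gen n k (s_gen n k j) = j"
proof -
  consider "j mod int n = int k mod int n" | "j mod int n = (int k + 1) mod int n"
    | "j mod int n \<noteq> int k mod int n \<and> j mod int n \<noteq> (int k + 1) mod int n" by blast
  then show ?thesis
  proof cases
    case 1
    then have "(j + 1) mod int n = (int k + 1) mod int n" by (metis mod_add_left_eq)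
    then show ?thesis using 1 s_gen_at_left s_gen_at_right assms by auto
  next
    case 2
    then have "(j - 1) mod int n = int k mod int n" by (metis add_diff_cancel_right' mod_diff_left_eq)
    then show ?thesis using 2 s_gen_at_left s_gen_at_right assms by auto
  next
    case 3
    then show ?thesis using s_gen_fixed by auto
  qed
qed

lemma s_gen_comp_s_gen: "n > 1 \<Longrightarrow> s_gen n k \<circ> s_gen n k = id"
  using s_gen_s_gen by auto

lemma comp_s_gen_s_gen: "n > 1 \<Longrightarrow> (u \<circ> s_gen n a) \<circ> s_gen n a = u"
  by (simp add: comp_assoc s_gen_comp_s_gen)

lemma bij_s_gen: "n > 1 \<Longrightarrow> bij (s_gen n k)"
  using s_gen_s_gen by (metis bij_betw_byWitness top_greatest subsetI UNIV_I)

lemma inv_s_gen: "n > 1 \<Longrightarrow> inv (s_gen n k) = s_gen n k"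
  by (metis inv_unique_comp s_gen_comp_s_gen)

lemma inv_s_gen_comp: "n > 1 \<Longrightarrow> bij w \<Longrightarrow> inv (s_gen n a \<circ> w) = inv w \<circ> s_gen n a"
  by (metis o_inv_distrib bij_s_gen inv_s_gen)

lemma s_gen_add_period: "s_gen n k (j + int n) = s_gen n k j + int n"
  by (simp add: s_gen_def)

lemma s_gen_self: "s_gen n a (int a) = int a + 1"
  by (simp add: s_gen_at_left)

lemma s_gen_Suc_self: "n > 1 \<Longrightarrow> s_gen n a (int a + 1) = int a"
  by (simp add: s_gen_at_right)

lemma s_gen_add_two_self: "n > 2 \<Longrightarrow> s_gen n a (int a + 2) = int a + 2"
  using add_two_mod_neq[of n "int a"] by (intro s_gen_fixed) auto

lemma add_mult_period:
  fixes f :: "int \<Rightarrow> int"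
  assumes "\<And>i. f (i + c) = f i + d"
  shows "f (i + t * c) = f i + t * d"
proof (induction t rule: int_induct[where k = 0])
  case (step1 t)
  then show ?case using assms[of "i + t * c"] by (simp add: algebra_simps)
next
  case (step2 t)
  then show ?case using assms[of "i + (t - 1) * c"] by (simp add: algebra_simps)
qed simp

lemma add_mult_period_invariant:
  assumes "\<And>i. f (i + c) = f (i::int)"
  shows "f (i + t * c) = f i"
proof (induction t rule: int_induct[where k = 0])
  case (step1 t)
  then show ?case using assms[of "i + t * c"] by (simp add: algebra_simps)
next
  case (step2 t)
  then show ?case using assms[of "i + (t - 1) * c"] by (simp add: algebra_simps)
qed simp

definition periodic_perm :: "nat \<Rightarrow> (int \<Rightarrow> int) \<Rightarrow> bool" where
  "periodic_perm n u \<longleftrightarrow> bij u \<and> (\<forall>i. u (i + int n) = u i + int n)"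

lemma periodic_perm_add_mult:
  "periodic_perm n u \<Longrightarrow> u (i + t * int n) = u i + t * int n"
  unfolding periodic_perm_def by (intro add_mult_period) auto

lemma periodic_perm_id: "periodic_perm n id"
  by (simp add: periodic_perm_def)

lemma periodic_perm_comp: "periodic_perm n u \<Longrightarrow> periodic_perm n v \<Longrightarrow> periodic_perm n (u \<circ> v)"
  by (auto simp: periodic_perm_def bij_comp)

lemma periodic_perm_s_gen: "n > 1 \<Longrightarrow> periodic_perm n (s_gen n k)"
  by (simp add: periodic_perm_def bij_s_gen s_gen_add_period)

lemma periodic_perm_comp_s_gen: "n > 1 \<Longrightarrow> periodic_perm n u \<Longrightarrow> periodic_perm n (u \<circ> s_gen n a)"
  by (simp add: periodic_perm_comp periodic_perm_s_gen)

lemma periodic_perm_inv: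
  assumes "periodic_perm n u"
  shows "periodic_perm n (inv u)"
proof -
  have b: "bij u" and P: "\<And>i. u (i + int n) = u i + int n"
    using assms periodic_perm_def by auto
  have "inv u (i + int n) = inv u i + int n" for i
  proof -
    have "u (inv u i + int n) = i + int n" using P b by (simp add: bij_is_surj surj_f_inv_f)
    then show ?thesis using b by (metis bij_inv_eq_iff)
  qed
  then show ?thesis using b bij_imp_bij_inv periodic_perm_def by auto
qed

lemma periodic_perm_neq_Suc: "periodic_perm n u \<Longrightarrow> u (int a) \<noteq> u (int a + 1)"
  unfolding periodic_perm_def by (metis bij_def inj_eq n_not_Suc_n of_nat_Suc of_nat_eq_iff add.commute)

lemma affine_perm_periodic: "affine_perm n w \<Longrightarrow> periodic_perm n w"
  by (simp add: affine_perm_def periodic_perm_def)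

lemma periodic_perm_inv_affine: "affine_perm n w \<Longrightarrow> periodic_perm n (inv w)"
  by (simp add: affine_perm_periodic periodic_perm_inv)

lemma word_prod_Nil: "word_prod n [] = id"
  by (simp add: word_prod_def)

lemma word_prod_Cons: "word_prod n (a # ws) = s_gen n a \<circ> word_prod n ws"
  by (simp add: word_prod_def)

lemma word_prod_append: "word_prod n (xs @ ys) = word_prod n xs \<circ> word_prod n ys"
  by (induction xs) (auto simp: word_prod_Nil word_prod_Cons)

lemma periodic_perm_word_prod: "n > 1 \<Longrightarrow> periodic_perm n (word_prod n ws)"
  by (induction ws) (auto simp: word_prod_Nil word_prod_Cons periodic_perm_id periodic_perm_comp periodic_perm_s_gen)

lemma card_residue_preimage:
  assumes "periodic_perm n x" "n > 0"
  shows "card {i\<in>{1..int n}. x i mod int n = c mod int n} = 1"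
proof -
  have b: "bij x" using assms periodic_perm_def by auto
  have window: "(i - 1) mod int n = i - 1" if "i \<in> {1..int n}" for i
    using that by simp
  obtain j where j: "x j = c" using b by (metis bij_pointE)
  define i0 where "i0 = (j - 1) mod int n + 1"
  have i0W: "i0 \<in> {1..int n}"
    unfolding i0_def using assms(2) by (simp add: pos_mod_bound pos_mod_sign add1_zle_eq)
  have "x j = x i0 + (j - 1) div int n * int n"
    using periodic_perm_add_mult[OF assms(1), of i0 "(j - 1) div int n"]
    by (simp add: i0_def algebra_simps)
  then have i0c: "x i0 mod int n = c mod int n" using j by (metis mod_mult_self1)
  have "i = i0" if "i \<in> {1..int n}" "x i mod int n = c mod int n" for i
  proof -
    have "x i mod int n = x i0 mod int n" using that i0c by simp
    then have "int n dvd x i - x i0" by (simp add: mod_eq_dvd_iff)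
    then obtain s where "x i = x i0 + s * int n" by (metis dvdE add.commute diff_add_cancel mult.commute)
    then have "x i = x (i0 + s * int n)" using periodic_perm_add_mult[OF assms(1)] by simp
    then have "i = i0 + s * int n" using b by (meson bij_def inj_eq)
    then have "(i - 1) mod int n = (i0 - 1 + s * int n) mod int n" by (simp add: algebra_simps)
    also have "\<dots> = (i0 - 1) mod int n" by (rule mod_mult_self1)
    finally show ?thesis using window that(1) i0W by simp
  qed
  then have "{i\<in>{1..int n}. x i mod int n = c mod int n} = {i0}" using i0W i0c by blast
  then show ?thesis by simp
qed

lemma affine_perm_s_gen_comp:
  assumes "n > 1" "affine_perm n x"
  shows "affine_perm n (s_gen n k \<circ> x)"
proof -
  have px: "periodic_perm n x" using affine_perm_periodic assms by auto
  let ?W = "{1..int n}"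
  have "(\<Sum>i\<in>?W. s_gen n k (x i)) = (\<Sum>i\<in>?W. x i)
      + int (card {i\<in>?W. x i mod int n = int k mod int n})
      - int (card {i\<in>?W. x i mod int n = (int k + 1) mod int n})"
    by (simp add: s_gen_eq_of_bool[OF assms(1)] sum.distrib sum_subtractf Int_def conj_commute)
  also have "\<dots> = (\<Sum>i\<in>?W. x i)"
    using card_residue_preimage[OF px, of "int k"] card_residue_preimage[OF px, of "int k + 1"] assms(1)
    by simp
  finally show ?thesis
    using periodic_perm_comp[OF periodic_perm_s_gen[OF assms(1)] px] assms(2)
    by (simp add: affine_perm_def periodic_perm_def)
qed

lemma affine_perm_id: "affine_perm n id"
  by (simp add: affine_perm_def)

lemma affine_perm_word_prod_comp: "n > 1 \<Longrightarrow> affine_perm n x \<Longrightarrow> affine_perm n (word_prod n ws \<circ> x)"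
  by (induction ws) (auto simp: word_prod_Nil word_prod_Cons affine_perm_s_gen_comp comp_assoc)

lemma affine_perm_word_prod: "n > 1 \<Longrightarrow> affine_perm n (word_prod n ws)"
  using affine_perm_word_prod_comp[of n id ws] affine_perm_id by simp


section \<open>Inversion counts and the Lehmer code\<close>

definition inv_count :: "(int \<Rightarrow> int) \<Rightarrow> int \<Rightarrow> nat" where
  "inv_count u i = card {j. j > i \<and> u j < u i}"

text \<open>For \<open>u = w\<^sup>-\<^sup>1\<close> the values \<open>lehmer u r\<close>, \<open>r < n\<close>, are the entries of the code \<open>c(w\<^sup>-\<^sup>1)\<close>,
  indexed by residues \<open>0, \<dots>, n - 1\<close> instead of \<open>1, \<dots>, n\<close>.\<close>

definition lehmer :: "(int \<Rightarrow> int) \<Rightarrow> nat \<Rightarrow> nat" where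
  "lehmer u r = inv_count u (int r)"

definition lehmer_sum :: "nat \<Rightarrow> (int \<Rightarrow> int) \<Rightarrow> nat" where
  "lehmer_sum n u = (\<Sum>r<n. lehmer u r)"

lemma periodic_perm_mod_div:
  "periodic_perm n u \<Longrightarrow> u j = u (j mod int n) + j div int n * int n"
  using periodic_perm_add_mult[of n u "j mod int n" "j div int n"] by simp

lemma periodic_perm_displacement_bounded:
  assumes "periodic_perm n u" "n > 0"
  obtains M where "\<And>j. \<bar>u j - j\<bar> \<le> M"
proof
  fix j
  have "u j - j = u (j mod int n) - j mod int n"
    using periodic_perm_mod_div[OF assms(1), of j] by (simp add: algebra_simps)
  moreover have "j mod int n \<in> {0..<int n}" using assms(2) by simp
  ultimately show "\<bar>u j - j\<bar> \<le> Max ((\<lambda>r. \<bar>u r - r\<bar>) ` {0..<int n})"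
    by (intro Max_ge) auto
qed

lemma finite_inversions:
  assumes "periodic_perm n u" "n > 0"
  shows "finite {j. j > i \<and> u j < u i}"
proof -
  obtain M where M: "\<And>j. \<bar>u j - j\<bar> \<le> M"
    using periodic_perm_displacement_bounded[OF assms] by blast
  have "{j. j > i \<and> u j < u i} \<subseteq> {i<..u i + M}"
  proof
    fix j assume "j \<in> {j. j > i \<and> u j < u i}"
    then show "j \<in> {i<..u i + M}" using M[of j] by auto
  qed
  then show ?thesis by (rule finite_subset) simp
qed

lemma inv_count_add_period:
  assumes "periodic_perm n u"
  shows "inv_count u (i + int n) = inv_count u i"
proof -
  have P: "\<And>j. u (j + int n) = u j + int n" using assms periodic_perm_def by auto
  have "{j. j > i + int n \<and> u j < u (i + int n)} = (\<lambda>j. j + int n) ` {j. j > i \<and> u j < u i}"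
  proof (rule set_eqI, rule iffI)
    fix x assume "x \<in> {j. j > i + int n \<and> u j < u (i + int n)}"
    then show "x \<in> (\<lambda>j. j + int n) ` {j. j > i \<and> u j < u i}"
      using P[of "x - int n"] P[of i] by (intro image_eqI[of _ _ "x - int n"]) auto
  qed (auto simp: P)
  then show ?thesis unfolding inv_count_def by (simp add: card_image inj_on_def)
qed

lemma inv_count_mod: "periodic_perm n u \<Longrightarrow> inv_count u i = inv_count u (i mod int n)"
  using add_mult_period_invariant[of "inv_count u" "int n" "i mod int n" "i div int n"]
    inv_count_add_period by simp

lemma inv_count_Suc_eq_lehmer:
  assumes "periodic_perm n u"
  shows "inv_count u (int a + 1) = lehmer u (Suc a mod n)"
proof -
  have "inv_count u (int a + 1) = inv_count u ((int a + 1) mod int n)"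
    using inv_count_mod[OF assms] by simp
  also have "(int a + 1) mod int n = int (Suc a mod n)" by (simp add: zmod_int add.commute)
  finally show ?thesis by (simp add: lehmer_def)
qed

lemma card_involution_preimage:
  assumes "\<And>j. s (s j) = j"
  shows "card {j. Q (s j)} = card {j. Q j}"
proof -
  have "bij_betw s {j. Q (s j)} {j. Q j}"
    by (rule bij_betw_byWitness[where f'=s]) (auto simp: assms)
  then show ?thesis by (rule bij_betw_same_card)
qed

lemma inv_count_comp_involution:
  assumes "\<And>j. s (s j) = j"
  shows "inv_count (u \<circ> s) i = card {j. s j > i \<and> u j < u (s i)}"
  unfolding inv_count_def
  using card_involution_preimage[OF assms, of "\<lambda>j. s j > i \<and> u j < u (s i)"] assms by simp

lemma inv_count_comp_s_gen_left:
  assumes "n > 2" "periodic_perm n u" "u (int a) < u (int a + 1)"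
  shows "inv_count (u \<circ> s_gen n a) (int a) = inv_count u (int a + 1) + 1"
proof -
  let ?s = "s_gen n a"
  have inv: "\<And>j. ?s (?s j) = j" using s_gen_s_gen assms by auto
  have "{j. ?s j > int a \<and> u j < u (?s (int a))} = insert (int a) {j. j > int a + 1 \<and> u j < u (int a + 1)}"
  proof (intro set_eqI iffI)
    fix j assume j: "j \<in> {j. ?s j > int a \<and> u j < u (?s (int a))}"
    then have j1: "?s j > int a" "u j < u (int a + 1)" using s_gen_self by auto
    show "j \<in> insert (int a) {j. j > int a + 1 \<and> u j < u (int a + 1)}"
    proof (cases "j = int a \<or> j = int a + 1")
      case True
      then show ?thesis using j1 by auto
    next
      case False
      have "j > int a + 1" using s_gen_cases[of n a j] assms j1 False by auto
      then show ?thesis using j1 by auto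
    qed
  next
    fix j assume j: "j \<in> insert (int a) {j. j > int a + 1 \<and> u j < u (int a + 1)}"
    show "j \<in> {j. ?s j > int a \<and> u j < u (?s (int a))}"
    proof (cases "j = int a")
      case True
      then show ?thesis using assms s_gen_self by auto
    next
      case False
      then have "j > int a + 1" "u j < u (int a + 1)" using j by auto
      moreover have "?s j > int a" using s_gen_cases[of n a j] assms \<open>j > int a + 1\<close> by auto
      ultimately show ?thesis using s_gen_self by auto
    qed
  qed
  moreover have "finite {j. j > int a + 1 \<and> u j < u (int a + 1)}" using finite_inversions[OF assms(2)] assms(1) by simp
  ultimately show ?thesis
    unfolding inv_count_comp_involution[OF inv] using s_gen_self[of n a] by (simp add: inv_count_def)
qed

lemma inv_count_comp_s_gen_right:
  assumes "n > 2" "periodic_perm n u" "u (int a) < u (int a + 1)"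
  shows "inv_count (u \<circ> s_gen n a) (int a + 1) = inv_count u (int a)"
proof -
  let ?s = "s_gen n a"
  have inv: "\<And>j. ?s (?s j) = j" using s_gen_s_gen assms by auto
  have "{j. ?s j > int a + 1 \<and> u j < u (?s (int a + 1))} = {j. j > int a \<and> u j < u (int a)}"
  proof (intro set_eqI iffI)
    fix j assume j: "j \<in> {j. ?s j > int a + 1 \<and> u j < u (?s (int a + 1))}"
    then have j1: "?s j > int a + 1" "u j < u (int a)" using s_gen_Suc_self assms by auto
    have "j > int a" using s_gen_cases[of n a j] assms j1 by auto
    then show "j \<in> {j. j > int a \<and> u j < u (int a)}" using j1 by auto
  next
    fix j assume j: "j \<in> {j. j > int a \<and> u j < u (int a)}"
    then have j1: "j > int a" "u j < u (int a)" by auto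
    have "j \<noteq> int a + 1" using j1 assms(3) by auto
    then consider "j = int a + 2" | "j > int a + 2" using j1 by linarith
    then have "?s j > int a + 1"
    proof cases
      case 1
      then show ?thesis using s_gen_add_two_self assms by auto
    next
      case 2
      then show ?thesis using s_gen_cases[of n a j] assms by auto
    qed
    then show "j \<in> {j. ?s j > int a + 1 \<and> u j < u (?s (int a + 1))}" using j1 s_gen_Suc_self assms by auto
  qed
  then show ?thesis
    unfolding inv_count_comp_involution[OF inv] using s_gen_Suc_self[of n a] assms by (simp add: inv_count_def)
qed

lemma inv_count_comp_s_gen_other:
  assumes "n > 2" "i mod int n \<noteq> int a mod int n" "i mod int n \<noteq> (int a + 1) mod int n"
  shows "inv_count (u \<circ> s_gen n a) i = inv_count u i"
proof -
  let ?s = "s_gen n a"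
  have inv: "\<And>j. ?s (?s j) = j" using s_gen_s_gen assms by auto
  have si: "?s i = i" using s_gen_fixed assms by auto
  have "{j. ?s j > i \<and> u j < u (?s i)} = {j. j > i \<and> u j < u i}"
  proof (intro set_eqI iffI)
    fix j assume j: "j \<in> {j. ?s j > i \<and> u j < u (?s i)}"
    then have j1: "?s j > i" "u j < u i" using si by auto
    have "j \<noteq> i" using j1 si by auto
    moreover have "j \<ge> i"
    proof (rule ccontr)
      assume "\<not> j \<ge> i"
      then have "j + 1 \<le> i" by simp
      then have "?s j = j + 1 \<and> j + 1 = i" using s_gen_cases[of n a j] assms j1 by auto
      then have "j mod int n = int a mod int n" "i = j + 1" using s_gen_cases[of n a j] assms by auto
      then have "i mod int n = (int a + 1) mod int n" by (metis mod_add_left_eq)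
      then show False using assms by simp
    qed
    ultimately show "j \<in> {j. j > i \<and> u j < u i}" using j1 by auto
  next
    fix j assume j: "j \<in> {j. j > i \<and> u j < u i}"
    then have j1: "j > i" "u j < u i" by auto
    have "?s j > i"
    proof (rule ccontr)
      assume "\<not> ?s j > i"
      then have "?s j = j - 1 \<and> j = i + 1" using s_gen_cases[of n a j] assms j1 by auto
      then have "j mod int n = (int a + 1) mod int n" "j = i + 1" using s_gen_cases[of n a j] assms by auto
      then have "i mod int n = int a mod int n"
        by (metis add_diff_cancel_right' mod_diff_left_eq)
      then show False using assms by simp
    qed
    then show "j \<in> {j. ?s j > i \<and> u j < u (?s i)}" using j1 si by auto
  qed
  then show ?thesis
    unfolding inv_count_comp_involution[OF inv] using si by (simp add: inv_count_def)
qed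

lemma Suc_mod_neq: "n > 1 \<Longrightarrow> a < n \<Longrightarrow> Suc a mod n \<noteq> a"
  by (cases "Suc a = n") auto

lemma int_mod_neq_Suc_mod:
  assumes "r < n" "r \<noteq> Suc a mod n"
  shows "int r mod int n \<noteq> (int a + 1) mod int n"
  using assms by (metis add.commute mod_less of_nat_Suc of_nat_eq_iff zmod_int)

lemma lehmer_comp_s_gen_asc:
  assumes "n > 2" "periodic_perm n u" "a < n" "u (int a) < u (int a + 1)"
  shows "lehmer (u \<circ> s_gen n a) a = lehmer u (Suc a mod n) + 1"
    and "lehmer (u \<circ> s_gen n a) (Suc a mod n) = lehmer u a"
    and "\<And>r. r < n \<Longrightarrow> r \<noteq> a \<Longrightarrow> r \<noteq> Suc a mod n \<Longrightarrow> lehmer (u \<circ> s_gen n a) r = lehmer u r"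
proof -
  have p': "periodic_perm n (u \<circ> s_gen n a)" using periodic_perm_comp_s_gen assms by auto
  show "lehmer (u \<circ> s_gen n a) a = lehmer u (Suc a mod n) + 1"
    using inv_count_comp_s_gen_left[OF assms(1,2,4)] inv_count_Suc_eq_lehmer[OF assms(2)]
    by (simp add: lehmer_def)
  show "lehmer (u \<circ> s_gen n a) (Suc a mod n) = lehmer u a"
    using inv_count_comp_s_gen_right[OF assms(1,2,4)] inv_count_Suc_eq_lehmer[OF p']
    by (simp add: lehmer_def)
  fix r assume "r < n" "r \<noteq> a" "r \<noteq> Suc a mod n"
  then show "lehmer (u \<circ> s_gen n a) r = lehmer u r"
    using inv_count_comp_s_gen_other[OF assms(1)] int_mod_neq_Suc_mod assms(3)
    by (simp add: lehmer_def)
qed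

lemma asc_comp_s_gen_of_desc:
  assumes "n > 1" "u (int a) > u (int a + 1)"
  shows "(u \<circ> s_gen n a) (int a) < (u \<circ> s_gen n a) (int a + 1)"
  using assms s_gen_self[of n a] s_gen_Suc_self[of n a] by simp

lemma lehmer_comp_s_gen_desc:
  assumes "n > 2" "periodic_perm n u" "a < n" "u (int a) > u (int a + 1)"
  shows "lehmer (u \<circ> s_gen n a) (Suc a mod n) + 1 = lehmer u a"
    and "lehmer (u \<circ> s_gen n a) a = lehmer u (Suc a mod n)"
    and "\<And>r. r < n \<Longrightarrow> r \<noteq> a \<Longrightarrow> r \<noteq> Suc a mod n \<Longrightarrow> lehmer (u \<circ> s_gen n a) r = lehmer u r"
proof -
  have n1: "n > 1" using assms(1) by simp
  note asc = lehmer_comp_s_gen_asc[OF assms(1) periodic_perm_comp_s_gen[OF n1 assms(2)] assms(3)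
      asc_comp_s_gen_of_desc[OF n1 assms(4)], unfolded comp_s_gen_s_gen[OF n1]]
  show "lehmer (u \<circ> s_gen n a) (Suc a mod n) + 1 = lehmer u a" using asc(1) by linarith
  show "lehmer (u \<circ> s_gen n a) a = lehmer u (Suc a mod n)" using asc(2) by (rule sym)
  show "\<And>r. r < n \<Longrightarrow> r \<noteq> a \<Longrightarrow> r \<noteq> Suc a mod n \<Longrightarrow> lehmer (u \<circ> s_gen n a) r = lehmer u r"
    using asc(3) by metis
qed

lemma sum_remove_two:
  fixes n :: nat
  assumes "a < n" "b < n" "a \<noteq> b"
  shows "(\<Sum>r<n. f r) = f a + f b + (\<Sum>r\<in>{..<n} - {a, b}. f r)"
proof -
  have "(\<Sum>r<n. f r) = f a + (\<Sum>r\<in>{..<n} - {a}. f r)" using assms by (intro sum.remove) auto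
  also have "(\<Sum>r\<in>{..<n} - {a}. f r) = f b + (\<Sum>r\<in>{..<n} - {a} - {b}. f r)"
    using assms by (intro sum.remove) auto
  finally show ?thesis by (simp add: Diff_insert2[symmetric] insert_commute add.assoc)
qed

lemma lehmer_sum_comp_s_gen_asc:
  assumes "n > 2" "periodic_perm n u" "a < n" "u (int a) < u (int a + 1)"
  shows "lehmer_sum n (u \<circ> s_gen n a) = lehmer_sum n u + 1"
proof -
  let ?b = "Suc a mod n"
  let ?v = "u \<circ> s_gen n a"
  have b: "?b < n" "a \<noteq> ?b" using assms Suc_mod_neq[of n a] by auto
  have "(\<Sum>r\<in>{..<n} - {a, ?b}. lehmer ?v r) = (\<Sum>r\<in>{..<n} - {a, ?b}. lehmer u r)"
    using lehmer_comp_s_gen_asc(3)[OF assms] by (intro sum.cong) auto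
  then show ?thesis
    using lehmer_comp_s_gen_asc(1,2)[OF assms] sum_remove_two[OF assms(3) b, of "lehmer ?v"]
      sum_remove_two[OF assms(3) b, of "lehmer u"]
    by (simp add: lehmer_sum_def)
qed

lemma lehmer_sum_comp_s_gen_desc:
  assumes "n > 2" "periodic_perm n u" "a < n" "u (int a) > u (int a + 1)"
  shows "lehmer_sum n (u \<circ> s_gen n a) + 1 = lehmer_sum n u"
proof -
  have n1: "n > 1" using assms(1) by simp
  show ?thesis
    using lehmer_sum_comp_s_gen_asc[OF assms(1) periodic_perm_comp_s_gen[OF n1 assms(2)] assms(3)
        asc_comp_s_gen_of_desc[OF n1 assms(4)], unfolded comp_s_gen_s_gen[OF n1]]
    by linarith
qed

lemma lehmer_sum_comp_s_gen_le:
  assumes "n > 2" "periodic_perm n u" "a < n"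
  shows "lehmer_sum n (u \<circ> s_gen n a) \<le> lehmer_sum n u + 1"
  using lehmer_sum_comp_s_gen_asc[OF assms] lehmer_sum_comp_s_gen_desc[OF assms]
    periodic_perm_neq_Suc[OF assms(2), of a]
  by (cases "u (int a) < u (int a + 1)") auto

lemma desc_of_lehmer_gt:
  assumes "periodic_perm n u" "n > 0" "lehmer u a > lehmer u (Suc a mod n)"
  shows "u (int a) > u (int a + 1)"
proof (rule ccontr)
  assume "\<not> u (int a) > u (int a + 1)"
  then have asc: "u (int a) < u (int a + 1)" using periodic_perm_neq_Suc[OF assms(1), of a] by linarith
  have "{j. j > int a \<and> u j < u (int a)} \<subseteq> {j. j > int a + 1 \<and> u j < u (int a + 1)}"
  proof
    fix j assume j: "j \<in> {j. j > int a \<and> u j < u (int a)}"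
    then have "j \<noteq> int a + 1" using asc by auto
    then show "j \<in> {j. j > int a + 1 \<and> u j < u (int a + 1)}" using j asc by auto
  qed
  then have "inv_count u (int a) \<le> inv_count u (int a + 1)"
    unfolding inv_count_def using finite_inversions[OF assms(1,2)] by (intro card_mono) auto
  then show False using assms(3) inv_count_Suc_eq_lehmer[OF assms(1)] by (simp add: lehmer_def)
qed

section \<open>Coxeter length as the sum of the Lehmer code\<close>

lemma lehmer_sum_id: "lehmer_sum n id = 0"
proof -
  have "inv_count id i = 0" for i by (simp add: inv_count_def)
  then show ?thesis unfolding lehmer_sum_def lehmer_def by simp
qed

lemma lehmer_sum_inv_word_prod_le:
  assumes "n > 2" "set ws \<subseteq> {..<n}"
  shows "lehmer_sum n (inv (word_prod n ws)) \<le> length ws"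
  using assms(2)
proof (induction ws)
  case Nil
  show ?case unfolding word_prod_Nil inv_id lehmer_sum_id by simp
next
  case (Cons a ws)
  have pW: "periodic_perm n (word_prod n ws)" using periodic_perm_word_prod assms by simp
  then have "inv (word_prod n (a # ws)) = inv (word_prod n ws) \<circ> s_gen n a"
    using inv_s_gen_comp[of n "word_prod n ws" a] assms(1) by (simp add: word_prod_Cons periodic_perm_def)
  then have "lehmer_sum n (inv (word_prod n (a # ws))) \<le> lehmer_sum n (inv (word_prod n ws)) + 1"
    using lehmer_sum_comp_s_gen_le[OF assms(1) periodic_perm_inv[OF pW], of a] Cons.prems by simp
  then show ?case using Cons by simp
qed

lemma strict_mono_int_le_add:
  assumes "\<And>i. (u::int \<Rightarrow> int) i < u (i + 1)"
  shows "u i \<le> u (i + int d)"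
proof (induction d)
  case (Suc d)
  have "u (i + int d) < u (i + int d + 1)" by (rule assms)
  moreover have e: "i + int (Suc d) = i + int d + 1" by simp
  ultimately show ?case using Suc unfolding e by linarith
qed simp

lemma strict_mono_surj_succ:
  assumes "\<And>i. (u::int \<Rightarrow> int) i < u (i + 1)" "surj u"
  shows "u (i + 1) = u i + 1"
proof (rule ccontr)
  assume "u (i + 1) \<noteq> u i + 1"
  then have gt: "u (i + 1) > u i + 1" using assms(1)[of i] by linarith
  obtain j where j: "u j = u i + 1" using assms(2) by (metis surjD)
  show False
  proof (cases "j \<le> i")
    case True
    then show False using strict_mono_int_le_add[where u = u, OF assms(1), of j "nat (i - j)"] j by simp
  next
    case False
    then show False using strict_mono_int_le_add[where u = u, OF assms(1), of "i + 1" "nat (j - i - 1)"] j gt by simp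
  qed
qed

lemma affine_perm_no_descent_eq_id:
  assumes "n > 2" "affine_perm n w"
    and no_descent: "\<forall>a<n. \<not> inv w (int a) > inv w (int a + 1)"
  shows "w = id"
proof -
  let ?u = "inv w"
  have pu: "periodic_perm n ?u" using periodic_perm_inv_affine[OF assms(2)] .
  have inc: "?u i < ?u (i + 1)" for i
  proof -
    define a where "a = nat (i mod int n)"
    have a: "a < n" "i = int a + i div int n * int n"
      using assms(1) by (simp_all add: a_def nat_less_iff)
    have "?u (int a) < ?u (int a + 1)"
      using no_descent a(1) periodic_perm_neq_Suc[OF pu, of a] by force
    moreover have "?u i = ?u (int a) + i div int n * int n"
      using periodic_perm_add_mult[OF pu, of "int a" "i div int n"] a(2) by simp
    moreover have "?u (i + 1) = ?u (int a + 1) + i div int n * int n"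
      using periodic_perm_add_mult[OF pu, of "int a + 1" "i div int n"] a(2)
      by (simp add: algebra_simps)
    ultimately show ?thesis by simp
  qed
  have "surj ?u" using pu periodic_perm_def bij_is_surj by blast
  then have shift: "?u (i + 1) = ?u i + 1" for i using strict_mono_surj_succ[where u = ?u, OF inc] by blast
  have lin: "?u i = ?u 0 + i" for i
  proof (induction i rule: int_induct[where k = 0])
    case (step1 i)
    then show ?case using shift[of i] by simp
  next
    case (step2 i)
    then show ?case using shift[of "i - 1"] by simp
  qed simp
  have wj: "w j = j - ?u 0" for j
    using lin[of "w j"] assms(2) by (simp add: affine_perm_def bij_is_inj)
  \<comment> \<open>so \<open>w\<close> is a translation, and the window-sum condition forces it to be trivial\<close>
  have "(\<Sum>i\<in>{1..int n}. i - ?u 0) = (\<Sum>i\<in>{1..int n}. i)"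
    using assms(2) wj by (simp add: affine_perm_def)
  then have "?u 0 = 0" using assms(1) by (simp add: sum_subtractf)
  then show ?thesis using wj by auto
qed

lemma word_of_lehmer_sum:
  assumes "n > 2" "affine_perm n w"
  obtains ws where "set ws \<subseteq> {..<n}" "word_prod n ws = w" "length ws = lehmer_sum n (inv w)"
proof -
  have "\<exists>ws. set ws \<subseteq> {..<n} \<and> word_prod n ws = w \<and> length ws = lehmer_sum n (inv w)"
    using assms(2)
  proof (induction "lehmer_sum n (inv w)" arbitrary: w rule: less_induct)
    case less
    have pw: "periodic_perm n w" using affine_perm_periodic less.prems by simp
    show ?case
    proof (cases "\<exists>a<n. inv w (int a) > inv w (int a + 1)")
      case True
      then obtain a where a: "a < n" "inv w (int a) > inv w (int a + 1)" by blast
      let ?w = "s_gen n a \<circ> w"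
      have aw: "affine_perm n ?w" using affine_perm_s_gen_comp less.prems assms(1) by simp
      have "inv ?w = inv w \<circ> s_gen n a"
        using inv_s_gen_comp[of n w a] pw assms(1) by (simp add: periodic_perm_def)
      then have dec: "lehmer_sum n (inv ?w) + 1 = lehmer_sum n (inv w)"
        using lehmer_sum_comp_s_gen_desc[OF assms(1) periodic_perm_inv[OF pw] a] by simp
      then obtain ws where ws: "set ws \<subseteq> {..<n}" "word_prod n ws = ?w" "length ws = lehmer_sum n (inv ?w)"
        using less.hyps[OF _ aw] by force
      have "word_prod n (a # ws) = w"
        using ws(2) s_gen_comp_s_gen[of n a] assms(1) by (simp add: word_prod_Cons comp_assoc[symmetric])
      then show ?thesis using ws a dec by (intro exI[of _ "a # ws"]) auto
    next
      case False
      then have "w = id" using affine_perm_no_descent_eq_id[OF assms(1) less.prems] by auto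
      then show ?thesis using lehmer_sum_id by (intro exI[of _ "[]"]) (auto simp: word_prod_Nil)
    qed
  qed
  then show ?thesis using that by blast
qed

lemma aff_length_le: "set ws \<subseteq> {..<n} \<Longrightarrow> word_prod n ws = w \<Longrightarrow> aff_length n w \<le> length ws"
  unfolding aff_length_def by (intro Least_le) blast

lemma aff_length_eq_lehmer_sum:
  assumes "n > 2" "affine_perm n w"
  shows "aff_length n w = lehmer_sum n (inv w)"
proof -
  obtain ws where ws: "set ws \<subseteq> {..<n}" "word_prod n ws = w" "length ws = lehmer_sum n (inv w)"
    using word_of_lehmer_sum[OF assms] by blast
  show ?thesis unfolding aff_length_def
  proof (rule Least_equality)
    show "\<exists>ws. length ws = lehmer_sum n (inv w) \<and> set ws \<subseteq> {..<n} \<and> word_prod n ws = w"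
      using ws by blast
  next
    fix k assume "\<exists>ws. length ws = k \<and> set ws \<subseteq> {..<n} \<and> word_prod n ws = w"
    then show "lehmer_sum n (inv w) \<le> k" using lehmer_sum_inv_word_prod_le[OF assms(1)] by blast
  qed
qed

lemma aff_length_id: "aff_length n id = 0"
  using aff_length_le[of "[]" n id] by (simp add: word_prod_Nil)

lemma aff_length_s_gen_comp:
  assumes "n > 2" "affine_perm n z" "a < n"
  shows "inv z (int a) < inv z (int a + 1) \<Longrightarrow> aff_length n (s_gen n a \<circ> z) = aff_length n z + 1"
    and "inv z (int a) > inv z (int a + 1) \<Longrightarrow> aff_length n (s_gen n a \<circ> z) + 1 = aff_length n z"
proof -
  have pu: "periodic_perm n (inv z)" using periodic_perm_inv_affine[OF assms(2)] .
  have iz: "inv (s_gen n a \<circ> z) = inv z \<circ> s_gen n a"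
    using inv_s_gen_comp[of n z a] assms by (simp add: affine_perm_def)
  have len: "aff_length n (s_gen n a \<circ> z) = lehmer_sum n (inv z \<circ> s_gen n a)"
    using aff_length_eq_lehmer_sum[OF assms(1) affine_perm_s_gen_comp[OF _ assms(2)]] iz assms(1) by simp
  show "inv z (int a) < inv z (int a + 1) \<Longrightarrow> aff_length n (s_gen n a \<circ> z) = aff_length n z + 1"
    using lehmer_sum_comp_s_gen_asc[OF assms(1) pu assms(3)] aff_length_eq_lehmer_sum[OF assms(1,2)] len
    by simp
  show "inv z (int a) > inv z (int a + 1) \<Longrightarrow> aff_length n (s_gen n a \<circ> z) + 1 = aff_length n z"
    using lehmer_sum_comp_s_gen_desc[OF assms(1) pu assms(3)] aff_length_eq_lehmer_sum[OF assms(1,2)] len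
    by simp
qed

lemma aff_length_s_gen_comp_le:
  assumes "n > 2" "affine_perm n z" "a < n"
  shows "aff_length n (s_gen n a \<circ> z) \<le> aff_length n z + 1"
  using aff_length_s_gen_comp[OF assms] periodic_perm_neq_Suc[OF periodic_perm_inv_affine[OF assms(2)], of a]
  by (cases "inv z (int a) < inv z (int a + 1)") auto

lemma aff_length_word_prod_comp_le:
  assumes "n > 2" "affine_perm n y" "set ws \<subseteq> {..<n}"
  shows "aff_length n (word_prod n ws \<circ> y) \<le> aff_length n y + length ws"
  using assms(3)
proof (induction ws)
  case Nil
  then show ?case by (simp add: word_prod_Nil)
next
  case (Cons a ws)
  have "affine_perm n (word_prod n ws \<circ> y)" using affine_perm_word_prod_comp assms by simp
  then have "aff_length n (s_gen n a \<circ> (word_prod n ws \<circ> y)) \<le> aff_length n (word_prod n ws \<circ> y) + 1"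
    using aff_length_s_gen_comp_le[OF assms(1)] Cons.prems by simp
  moreover have e: "word_prod n (a # ws) \<circ> y = s_gen n a \<circ> (word_prod n ws \<circ> y)"
    by (simp add: word_prod_Cons comp_assoc)
  moreover have "aff_length n (word_prod n ws \<circ> y) \<le> aff_length n y + length ws"
    using Cons.prems by (intro Cons.IH) simp
  ultimately show ?case unfolding e length_Cons by linarith
qed

lemma aff_length_comp_le:
  assumes "n > 2" "affine_perm n x" "affine_perm n y"
  shows "aff_length n (x \<circ> y) \<le> aff_length n x + aff_length n y"
proof -
  obtain ws where ws: "set ws \<subseteq> {..<n}" "word_prod n ws = x" "length ws = lehmer_sum n (inv x)"
    using word_of_lehmer_sum[OF assms(1,2)] by blast
  show ?thesis
    using aff_length_word_prod_comp_le[OF assms(1,3) ws(1)] ws aff_length_eq_lehmer_sum[OF assms(1,2)]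
    by simp
qed

section \<open>Cyclically decreasing words\<close>

definition cd_word :: "nat \<Rightarrow> nat list \<Rightarrow> bool" where
  "cd_word n ws \<longleftrightarrow> distinct ws \<and> set ws \<subseteq> {..<n} \<and> sorted_wrt (\<lambda>x y. y \<noteq> Suc x mod n) ws"

lemma cyc_dec_cd_word:
  assumes "cyc_dec n v"
  obtains ws where "cd_word n ws" "word_prod n ws = v" "length ws = aff_length n v"
proof -
  obtain ws where ws: "reduced_word n ws v" "distinct ws"
    "\<forall>i p q. i < n \<and> p < length ws \<and> q < length ws \<and> ws ! p = (i + 1) mod n \<and> ws ! q = i \<longrightarrow> p < q"
    using assms unfolding cyc_dec_def by blast
  have sub: "set ws \<subseteq> {..<n}" using ws(1) reduced_word_def by blast
  have "sorted_wrt (\<lambda>x y. y \<noteq> Suc x mod n) ws"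
    unfolding sorted_wrt_iff_nth_less
  proof (intro allI impI notI)
    fix p q assume pq: "p < q" "q < length ws" and e: "ws ! q = Suc (ws ! p) mod n"
    have "ws ! p < n" using sub pq by (meson lessThan_iff nth_mem order_less_trans subsetD)
    then show False using ws(3)[rule_format, of "ws ! p" q p] pq e by simp
  qed
  then show ?thesis using that ws sub unfolding cd_word_def reduced_word_def by blast
qed

lemma cd_word_cyc_dec:
  assumes "n > 1" "cd_word n ws" "word_prod n ws = v" "aff_length n v = length ws"
  shows "cyc_dec n v"
proof -
  have so: "sorted_wrt (\<lambda>x y. y \<noteq> Suc x mod n) ws" using assms(2) cd_word_def by auto
  have "p < q" if "i < n" "p < length ws" "q < length ws" "ws ! p = (i + 1) mod n" "ws ! q = i"
    for i p q
  proof (rule ccontr)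
    assume "\<not> p < q"
    then consider "p = q" | "q < p" by linarith
    then show False
    proof cases
      case 1
      then show False using that Suc_mod_neq[OF assms(1) that(1)] by simp
    next
      case 2
      then show False using so[unfolded sorted_wrt_iff_nth_less, rule_format, of q p] that by simp
    qed
  qed
  moreover have "reduced_word n ws v" using assms(2-4) by (simp add: reduced_word_def cd_word_def)
  ultimately show ?thesis using assms(2) unfolding cyc_dec_def cd_word_def by blast
qed

lemma affine_perm_cyc_dec: "n > 1 \<Longrightarrow> cyc_dec n v \<Longrightarrow> affine_perm n v"
  by (metis cyc_dec_cd_word affine_perm_word_prod)

lemma image_mset_swap_values:
  assumes "finite A" "a \<in> A" "b \<in> A"
  shows "image_mset (\<lambda>p. if p = a then g b else if p = b then g a else g p) (mset_set A)
       = image_mset g (mset_set A)"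
proof (cases "a = b")
  case False
  let ?g' = "\<lambda>p. if p = a then g b else if p = b then g a else g p"
  have "A = {a, b} \<union> (A - {a, b})" using assms by auto
  then have "mset_set A = mset_set {a, b} + mset_set (A - {a, b})"
    using mset_set_Union[of "{a, b}" "A - {a, b}"] assms(1) by simp
  then have A: "mset_set A = {#a, b#} + mset_set (A - {a, b})" using False by simp
  have "image_mset ?g' (mset_set (A - {a, b})) = image_mset g (mset_set (A - {a, b}))"
    by (rule image_mset_cong) (use assms(1) in auto)
  then show ?thesis unfolding A using False by (simp add: add_mset_commute)
qed (auto intro: image_mset_cong)

lemma lehmer_cd_word_comp:
  assumes "n > 2" "cd_word n ws" "affine_perm n y"
    and "aff_length n (word_prod n ws \<circ> y) = aff_length n y + length ws"
  shows "\<exists>g. (\<forall>p<n. lehmer (inv (word_prod n ws \<circ> y)) p = g p + of_bool (p \<in> set ws))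
     \<and> image_mset g (mset_set {..<n}) = image_mset (lehmer (inv y)) (mset_set {..<n})"
  using assms(2,4)
proof (induction ws)
  case Nil
  then show ?case by (intro exI[of _ "lehmer (inv y)"]) (simp add: word_prod_Nil)
next
  case (Cons a r)
  let ?b = "Suc a mod n"
  define z where "z = word_prod n r \<circ> y"
  have vr: "cd_word n r" and an: "a < n" and anr: "a \<notin> set r" and bnr: "?b \<notin> set r"
    using Cons.prems(1) by (auto simp: cd_word_def)
  have b: "?b < n" "a \<noteq> ?b" using Suc_mod_neq[of n a] assms(1) an by auto
  have az: "affine_perm n z" unfolding z_def using affine_perm_word_prod_comp assms by simp
  have eq: "word_prod n (a # r) \<circ> y = s_gen n a \<circ> z"
    unfolding z_def by (simp add: word_prod_Cons comp_assoc)
  have "aff_length n z \<le> aff_length n y + length r"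
    unfolding z_def using aff_length_word_prod_comp_le[OF assms(1,3)] vr by (simp add: cd_word_def)
  moreover have "aff_length n (s_gen n a \<circ> z) \<le> aff_length n z + 1"
    using aff_length_s_gen_comp_le[OF assms(1) az an] .
  moreover have "aff_length n (s_gen n a \<circ> z) = aff_length n y + length r + 1"
    using Cons.prems(2) unfolding eq length_Cons by linarith
  ultimately have lz: "aff_length n z = aff_length n y + length r"
    and lsz: "aff_length n (s_gen n a \<circ> z) = aff_length n z + 1" by linarith+
  obtain g where g: "\<forall>p<n. lehmer (inv z) p = g p + of_bool (p \<in> set r)"
    "image_mset g (mset_set {..<n}) = image_mset (lehmer (inv y)) (mset_set {..<n})"
    using Cons.IH[OF vr lz[unfolded z_def]] unfolding z_def[symmetric] by blast
  have pu: "periodic_perm n (inv z)" using periodic_perm_inv_affine[OF az] .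
  have asc: "inv z (int a) < inv z (int a + 1)"
    using aff_length_s_gen_comp(2)[OF assms(1) az an] lsz periodic_perm_neq_Suc[OF pu, of a]
    by linarith
  have iz: "inv (s_gen n a \<circ> z) = inv z \<circ> s_gen n a"
    using inv_s_gen_comp[of n z a] az assms(1) by (simp add: affine_perm_def)
  define g' where "g' = (\<lambda>p. if p = a then g ?b else if p = ?b then g a else g p)"
  show ?case
  proof (intro exI[of _ g'] conjI allI impI)
    fix p assume p: "p < n"
    show "lehmer (inv (word_prod n (a # r) \<circ> y)) p = g' p + of_bool (p \<in> set (a # r))"
      unfolding eq iz using lehmer_comp_s_gen_asc[OF assms(1) pu an asc] g(1) p an b anr bnr
      by (cases "p = a"; cases "p = ?b") (auto simp: g'_def)
  next
    show "image_mset g' (mset_set {..<n}) = image_mset (lehmer (inv y)) (mset_set {..<n})"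
      unfolding g'_def using image_mset_swap_values[of "{..<n}" a ?b g] an b g(2) by simp
  qed
qed

lemma s_gen_eq:
  assumes "n > 1" "a < n"
  shows "s_gen n a j = (if j mod int n = int a then j + 1 else if j mod int n = int (Suc a mod n) then j - 1 else j)"
proof -
  have e1: "int a mod int n = int a" using assms by simp
  have e2: "(int a + 1) mod int n = int (Suc a mod n)" by (simp add: zmod_int add.commute)
  show ?thesis using s_gen_cases[OF assms(1), of a j] e1 e2 Suc_mod_neq[OF assms] by auto
qed

lemma mod_add_one_eq:
  assumes "n > 0" "j mod int n = int a"
  shows "(j + 1) mod int n = int (Suc a mod n)"
proof -
  have "(j + 1) mod int n = (j mod int n + 1) mod int n" by (simp add: mod_add_left_eq)
  then show ?thesis using assms by (simp add: zmod_int add.commute)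
qed

lemma mod_diff_one_eq:
  assumes "n > 0" "a < n" "j mod int n = int (Suc a mod n)"
  shows "(j - 1) mod int n = int a"
proof -
  have "(j - 1) mod int n = (j mod int n - 1) mod int n" by (simp add: mod_diff_left_eq)
  also have "\<dots> = (int (Suc a) mod int n - 1) mod int n" using assms by (simp add: zmod_int)
  also have "\<dots> = (int (Suc a) - 1) mod int n" by (simp add: mod_diff_left_eq)
  also have "\<dots> = int a" using assms by simp
  finally show ?thesis .
qed

lemma Suc_mod_inj: "a < n \<Longrightarrow> b < n \<Longrightarrow> Suc a mod n = Suc b mod n \<Longrightarrow> a = b"
  by (auto simp: mod_Suc split: if_splits)

lemma s_gen_commute_on_orbit:
  assumes "n > 2" "a < n" "b < n" "a \<noteq> b" "b \<noteq> Suc a mod n" "a \<noteq> Suc b mod n"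
    and "j mod int n = int a \<or> j mod int n = int (Suc a mod n)"
  shows "s_gen n a (s_gen n b j) = s_gen n b (s_gen n a j)"
proof -
  have n1: "n > 1" "n > 0" using assms by auto
  have sab: "Suc a mod n \<noteq> Suc b mod n" using Suc_mod_inj assms by blast
  have fixb: "s_gen n b i = i" if "i mod int n = int a \<or> i mod int n = int (Suc a mod n)" for i
  proof -
    have "i mod int n \<noteq> int b" using that assms by auto
    moreover have "i mod int n \<noteq> int (Suc b mod n)" using that assms sab by auto
    ultimately show ?thesis using s_gen_eq[OF n1(1) assms(3)] by simp
  qed
  consider "j mod int n = int a" | "j mod int n = int (Suc a mod n)" using assms by blast
  then show ?thesis
  proof cases
    case 1
    have "s_gen n a j = j + 1" using s_gen_eq[OF n1(1) assms(2)] 1 by simp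
    moreover have "(j + 1) mod int n = int (Suc a mod n)" using mod_add_one_eq[OF n1(2) 1] .
    ultimately show ?thesis using fixb 1 by simp
  next
    case 2
    have ne: "j mod int n \<noteq> int a" using 2 Suc_mod_neq[OF n1(1) assms(2)] by simp
    have "s_gen n a j = j - 1" using s_gen_eq[OF n1(1) assms(2)] 2 ne by simp
    moreover have "(j - 1) mod int n = int a" using mod_diff_one_eq[OF n1(2) assms(2) 2] .
    ultimately show ?thesis using fixb 2 by simp
  qed
qed

lemma s_gen_commute:
  assumes "n > 2" "a < n" "b < n" "a \<noteq> b" "b \<noteq> Suc a mod n" "a \<noteq> Suc b mod n"
  shows "s_gen n a \<circ> s_gen n b = s_gen n b \<circ> s_gen n a"
proof
  fix j
  have n1: "n > 1" using assms by simp
  show "(s_gen n a \<circ> s_gen n b) j = (s_gen n b \<circ> s_gen n a) j"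
  proof (cases "j mod int n = int a \<or> j mod int n = int (Suc a mod n)")
    case True
    then show ?thesis using s_gen_commute_on_orbit[OF assms True] by simp
  next
    case F1: False
    show ?thesis
    proof (cases "j mod int n = int b \<or> j mod int n = int (Suc b mod n)")
      case True
      then show ?thesis
        using s_gen_commute_on_orbit[OF assms(1,3,2) assms(4)[symmetric] assms(6,5) True] by simp
    next
      case False
      then show ?thesis using F1 s_gen_eq[OF n1 assms(2), of j] s_gen_eq[OF n1 assms(3), of j] by simp
    qed
  qed
qed

lemma word_prod_comp_s_gen_commute:
  assumes "\<forall>b\<in>set p. s_gen n a \<circ> s_gen n b = s_gen n b \<circ> s_gen n a"
  shows "word_prod n p \<circ> s_gen n a = s_gen n a \<circ> word_prod n p"
  using assms
proof (induction p)
  case Nil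
  then show ?case by (simp add: word_prod_Nil)
next
  case (Cons b p)
  have ih: "word_prod n p \<circ> s_gen n a = s_gen n a \<circ> word_prod n p"
    using Cons.prems by (intro Cons.IH) simp
  have cb: "s_gen n a \<circ> s_gen n b = s_gen n b \<circ> s_gen n a" using Cons.prems by (simp add: comp_def)
  have "word_prod n (b # p) \<circ> s_gen n a = s_gen n b \<circ> (word_prod n p \<circ> s_gen n a)"
    by (simp add: word_prod_Cons comp_assoc)
  also have "\<dots> = s_gen n b \<circ> (s_gen n a \<circ> word_prod n p)" by (simp only: ih)
  also have "\<dots> = (s_gen n b \<circ> s_gen n a) \<circ> word_prod n p" by (simp add: comp_assoc)
  also have "\<dots> = (s_gen n a \<circ> s_gen n b) \<circ> word_prod n p" by (simp only: cb)
  also have "\<dots> = s_gen n a \<circ> word_prod n (b # p)" by (simp add: word_prod_Cons comp_assoc)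
  finally show ?case .
qed

lemma cd_word_remove: "cd_word n (p @ a # q) \<Longrightarrow> cd_word n (p @ q)"
  by (auto simp: cd_word_def sorted_wrt_append)

lemma word_prod_move_to_front:
  assumes "n > 2" "cd_word n (p @ a # q)" "Suc a mod n \<notin> set p"
  shows "word_prod n (p @ a # q) = s_gen n a \<circ> word_prod n (p @ q)"
proof -
  have an: "a < n" using assms(2) by (simp add: cd_word_def)
  have "s_gen n a \<circ> s_gen n b = s_gen n b \<circ> s_gen n a" if b: "b \<in> set p" for b
  proof -
    have "b < n" "b \<noteq> a" using assms(2) b by (auto simp: cd_word_def)
    moreover have "a \<noteq> Suc b mod n" using assms(2) b by (auto simp: cd_word_def sorted_wrt_append)
    moreover have "b \<noteq> Suc a mod n" using assms(3) b by auto
    ultimately show ?thesis using s_gen_commute[OF assms(1) an] by simp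
  qed
  then have comm: "word_prod n p \<circ> s_gen n a = s_gen n a \<circ> word_prod n p"
    by (intro word_prod_comp_s_gen_commute) blast
  have "word_prod n (p @ a # q) = word_prod n p \<circ> s_gen n a \<circ> word_prod n q"
    by (simp add: word_prod_append word_prod_Cons comp_assoc)
  also have "\<dots> = s_gen n a \<circ> word_prod n (p @ q)"
    using comm by (simp add: word_prod_append comp_assoc)
  finally show ?thesis .
qed

lemma cd_word_set_determines:
  assumes "n > 2" "cd_word n ws1" "cd_word n ws2" "set ws1 = set ws2"
  shows "word_prod n ws1 = word_prod n ws2"
  using assms(2-4)
proof (induction ws1 arbitrary: ws2)
  case Nil
  then show ?case by simp
next
  case (Cons a r)
  have "a \<in> set ws2" using Cons.prems(3) by auto
  then obtain p q where ws2: "ws2 = p @ a # q" by (meson split_list)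
  have "Suc a mod n \<notin> set (a # r)"
    using Cons.prems(1) Suc_mod_neq[of n a] assms(1) by (auto simp: cd_word_def)
  then have sp: "Suc a mod n \<notin> set p" using Cons.prems(3) ws2 by auto
  have c2: "cd_word n (p @ a # q)" using Cons.prems(2) ws2 by simp
  have e: "word_prod n ws2 = s_gen n a \<circ> word_prod n (p @ q)"
    unfolding ws2 by (rule word_prod_move_to_front[OF assms(1) c2 sp])
  have "a \<notin> set r" using Cons.prems(1) by (simp add: cd_word_def)
  moreover have "a \<notin> set (p @ q)" using c2 by (simp add: cd_word_def)
  ultimately have "set r = set (p @ q)" using Cons.prems(3) ws2 by auto
  moreover have "cd_word n r" using Cons.prems(1) by (simp add: cd_word_def)
  moreover have "cd_word n (p @ q)" using c2 by (rule cd_word_remove)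
  ultimately have "word_prod n r = word_prod n (p @ q)" using Cons.IH by blast
  then show ?case using e by (simp add: word_prod_Cons)
qed

text \<open>\<open>cd_order n z t = (z - t) mod n\<close>: listing \<open>t = 1, \<dots>, n - 1\<close> runs through all residues
  except \<open>z\<close> in cyclically decreasing order, so any set avoiding \<open>z\<close> can be written as a
  \<^const>\<open>cd_word\<close>.\<close>

definition cd_order :: "nat \<Rightarrow> nat \<Rightarrow> nat \<Rightarrow> nat" where
  "cd_order n z t = (if t \<le> z then z - t else z + n - t)"

definition cd_list :: "nat \<Rightarrow> nat \<Rightarrow> nat set \<Rightarrow> nat list" where
  "cd_list n z D = filter (\<lambda>a. a \<in> D) (map (cd_order n z) [1..<n])"

lemma cd_order_range: "z < n \<Longrightarrow> t \<in> {1..<n} \<Longrightarrow> cd_order n z t < n \<and> cd_order n z t \<noteq> z"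
  unfolding cd_order_def by auto

lemma inj_on_cd_order: "z < n \<Longrightarrow> inj_on (cd_order n z) {1..<n}"
  unfolding cd_order_def by (rule inj_onI) (auto split: if_splits)

lemma cd_order_onto:
  assumes "z < n" "d < n" "d \<noteq> z"
  shows "d \<in> cd_order n z ` {1..<n}"
proof (cases "d < z")
  case True
  have "cd_order n z (z - d) = d" "z - d \<in> {1..<n}" unfolding cd_order_def using True assms by auto
  then show ?thesis by (metis image_eqI)
next
  case False
  then have dz: "d > z" using assms by simp
  have "cd_order n z (z + n - d) = d" "z + n - d \<in> {1..<n}" unfolding cd_order_def using dz assms by auto
  then show ?thesis by (metis image_eqI)
qed

lemma cd_order_cd:
  assumes "z < n" "t1 \<in> {1..<n}" "t2 \<in> {1..<n}" "t1 < t2"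
  shows "cd_order n z t2 \<noteq> Suc (cd_order n z t1) mod n"
proof (cases "t1 \<le> z")
  case True
  then have x: "cd_order n z t1 = z - t1" unfolding cd_order_def by simp
  have sx: "Suc (z - t1) mod n = Suc (z - t1)" using True assms by simp
  show ?thesis
  proof (cases "t2 \<le> z")
    case True
    then show ?thesis unfolding x sx unfolding cd_order_def using assms by auto
  next
    case False
    then show ?thesis unfolding x sx unfolding cd_order_def using assms True by auto
  qed
next
  case False
  then have t2: "\<not> t2 \<le> z" using assms by simp
  have x: "cd_order n z t1 = z + n - t1" "cd_order n z t2 = z + n - t2" unfolding cd_order_def using False t2 by auto
  show ?thesis
  proof (cases "Suc (z + n - t1) = n")
    case True
    then show ?thesis unfolding x using assms t2 by auto
  next
    case F: False
    then have "Suc (z + n - t1) mod n = Suc (z + n - t1)" using assms False by simp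
    then show ?thesis unfolding x using assms by auto
  qed
qed

lemma cd_list_cd_word:
  assumes "z < n" "D \<subseteq> {..<n}" "z \<notin> D"
  shows "cd_word n (cd_list n z D) \<and> set (cd_list n z D) = D"
proof -
  have d: "distinct (map (cd_order n z) [1..<n])" using inj_on_cd_order[OF assms(1)] by (simp add: distinct_map)
  have s: "set (map (cd_order n z) [1..<n]) \<subseteq> {..<n}" using cd_order_range[OF assms(1)] by auto
  have so: "sorted_wrt (\<lambda>x y. y \<noteq> Suc x mod n) (map (cd_order n z) [1..<n])"
    unfolding sorted_wrt_map
    by (rule sorted_wrt_mono_rel[OF _ sorted_wrt_upt]) (use cd_order_cd[OF assms(1)] in auto)
  have st: "set (cd_list n z D) = D"
  proof
    show "set (cd_list n z D) \<subseteq> D" unfolding cd_list_def by auto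
    show "D \<subseteq> set (cd_list n z D)"
    proof
      fix d assume "d \<in> D"
      then have "d < n" "d \<noteq> z" using assms by auto
      then have "d \<in> set (map (cd_order n z) [1..<n])" using cd_order_onto[OF assms(1)] by auto
      then show "d \<in> set (cd_list n z D)" unfolding cd_list_def using \<open>d \<in> D\<close> by auto
    qed
  qed
  have "cd_word n (cd_list n z D)" unfolding cd_word_def cd_list_def
    using d s so by (auto simp: sorted_wrt_filter)
  then show ?thesis using st by simp
qed

lemma lehmer_has_zero:
  assumes "n > 0" "periodic_perm n u"
  obtains z where "z < n" "lehmer u z = 0"
proof -
  define m where "m = Min (u ` {0..<int n})"
  have "m \<in> u ` {0..<int n}" unfolding m_def using assms(1) by (intro Min_in) auto
  then obtain i0 where i0: "i0 \<in> {0..<int n}" "u i0 = m" by blast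
  have min: "u i0 \<le> u j" if "j \<ge> 0" for j
  proof -
    have "m \<le> u (j mod int n)" unfolding m_def using assms(1) by (intro Min_le) auto
    moreover have "0 \<le> j div int n * int n" using that assms(1) by (simp add: pos_imp_zdiv_nonneg_iff)
    ultimately show ?thesis using periodic_perm_mod_div[OF assms(2), of j] i0(2) by linarith
  qed
  have "\<not> u j < u i0" if "j > i0" for j using min[of j] that i0(1) by simp
  then have "{j. j > i0 \<and> u j < u i0} = {}" by auto
  then have "inv_count u i0 = 0" by (metis inv_count_def card.empty)
  then have "lehmer u (nat i0) = 0" using i0(1) by (simp add: lehmer_def)
  moreover have "nat i0 < n" using i0(1) by (simp add: nat_less_iff)
  ultimately show ?thesis using that by blast
qed

definition lehmer_supp :: "nat \<Rightarrow> (int \<Rightarrow> int) \<Rightarrow> nat set" where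
  "lehmer_supp n u = {p. p < n \<and> lehmer u p > 0}"

definition pred_mod :: "nat \<Rightarrow> nat \<Rightarrow> nat" where
  "pred_mod n p = (if p = 0 then n - 1 else p - 1)"

lemma pred_mod_Suc_mod: "p < n \<Longrightarrow> pred_mod n (Suc p mod n) = p"
  by (auto simp: pred_mod_def mod_Suc)

lemma Suc_pred_mod: "0 < n \<Longrightarrow> p < n \<Longrightarrow> Suc (pred_mod n p) mod n = p"
  by (auto simp: pred_mod_def mod_Suc)

lemma pred_mod_neq: "n > 1 \<Longrightarrow> pred_mod n p \<noteq> p"
  by (auto simp: pred_mod_def)

definition peel :: "nat \<Rightarrow> (int \<Rightarrow> int) \<Rightarrow> nat list \<Rightarrow> int \<Rightarrow> int" where
  "peel n w ws = foldl (\<lambda>x a. s_gen n a \<circ> x) w ws"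

lemma peel_snoc: "peel n w (ws @ [k]) = s_gen n k \<circ> peel n w ws"
  by (simp add: peel_def)

lemma word_prod_comp_peel: "n > 1 \<Longrightarrow> word_prod n ws \<circ> peel n w ws = w"
proof (induction ws arbitrary: w)
  case Nil
  then show ?case by (simp add: word_prod_Nil peel_def)
next
  case (Cons a ws)
  have "word_prod n (a # ws) \<circ> peel n w (a # ws) = s_gen n a \<circ> (word_prod n ws \<circ> peel n (s_gen n a \<circ> w) ws)"
    by (simp add: word_prod_Cons peel_def comp_assoc)
  also have "\<dots> = s_gen n a \<circ> (s_gen n a \<circ> w)" by (simp only: Cons.IH[OF Cons.prems])
  also have "\<dots> = w" using s_gen_comp_s_gen[OF Cons.prems] by (simp add: comp_assoc[symmetric])
  finally show ?case .
qed

lemma peel_step: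
  assumes "n > 2" "affine_perm n x" "k < n"
    and "lehmer (inv x) k > 0" "lehmer (inv x) (Suc k mod n) = 0"
  shows "aff_length n (s_gen n k \<circ> x) + 1 = aff_length n x"
    and "lehmer (inv (s_gen n k \<circ> x)) k = 0"
    and "lehmer (inv (s_gen n k \<circ> x)) (Suc k mod n) = lehmer (inv x) k - 1"
    and "\<And>r. r < n \<Longrightarrow> r \<noteq> k \<Longrightarrow> r \<noteq> Suc k mod n \<Longrightarrow>
           lehmer (inv (s_gen n k \<circ> x)) r = lehmer (inv x) r"
proof -
  have pu: "periodic_perm n (inv x)" using periodic_perm_inv_affine[OF assms(2)] .
  have desc: "inv x (int k) > inv x (int k + 1)"
    using desc_of_lehmer_gt[OF pu] assms by simp
  have ix: "inv (s_gen n k \<circ> x) = inv x \<circ> s_gen n k"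
    using inv_s_gen_comp[of n x k] assms(1,2) by (simp add: affine_perm_def)
  note code = lehmer_comp_s_gen_desc[OF assms(1) pu assms(3) desc]
  show "aff_length n (s_gen n k \<circ> x) + 1 = aff_length n x"
    using aff_length_s_gen_comp(2)[OF assms(1-3) desc] .
  show "lehmer (inv (s_gen n k \<circ> x)) k = 0" using code(2) assms(5) ix by simp
  show "lehmer (inv (s_gen n k \<circ> x)) (Suc k mod n) = lehmer (inv x) k - 1"
    using code(1) ix by simp
  show "\<And>r. r < n \<Longrightarrow> r \<noteq> k \<Longrightarrow> r \<noteq> Suc k mod n \<Longrightarrow>
      lehmer (inv (s_gen n k \<circ> x)) r = lehmer (inv x) r"
    using code(3) ix by simp
qed

text \<open>The code expected after peeling the letters in \<open>P\<close>: each entry at a peeled letter, lowered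
  by one, has moved one step up.\<close>

definition peel_code :: "nat \<Rightarrow> (nat \<Rightarrow> nat) \<Rightarrow> nat set \<Rightarrow> nat \<Rightarrow> nat" where
  "peel_code n c P p = (if pred_mod n p \<in> P then c (pred_mod n p) - 1 else if p \<in> P then 0 else c p)"

lemma peel_code_insert:
  assumes "n > 1" "k < n" "p < n" "k \<notin> P" "pred_mod n k \<notin> P"
    and "c' k = 0" "c' (Suc k mod n) = c k - 1"
    and "\<And>r. r < n \<Longrightarrow> r \<noteq> k \<Longrightarrow> r \<noteq> Suc k mod n \<Longrightarrow> c' r = peel_code n c P r"
  shows "c' p = peel_code n c (insert k P) p"
proof -
  consider "p = k" | "p = Suc k mod n" | "p \<noteq> k" "p \<noteq> Suc k mod n" by blast
  then show ?thesis
  proof cases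
    case 1
    then show ?thesis using assms(5,6) pred_mod_neq[OF assms(1), of k] by (simp add: peel_code_def)
  next
    case 2
    then show ?thesis using assms(7) pred_mod_Suc_mod[OF assms(2)] Suc_mod_neq[OF assms(1,2)]
      by (simp add: peel_code_def)
  next
    case 3
    then have "pred_mod n p \<noteq> k" using Suc_pred_mod[of n p] assms(3) by auto
    then show ?thesis using assms(8)[OF assms(3) 3] 3 by (simp add: peel_code_def)
  qed
qed

text \<open>Peeling the letters of a \<^const>\<open>cd_word\<close> spelling the support of the Lehmer code, each letter
  \<open>k\<close> is met while the code is still positive at \<open>k\<close> and already zero at \<open>k + 1\<close> (the letter
  \<open>k + 1\<close> was peeled before or never occurs), so it is a descent.\<close>

lemma peel_prefix:
  assumes "n > 2" "affine_perm n w" "cd_word n (pre @ rest)"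
    and "set (pre @ rest) = lehmer_supp n (inv w)"
  shows "affine_perm n (peel n w pre) \<and> aff_length n (peel n w pre) + length pre = aff_length n w
    \<and> (\<forall>p<n. lehmer (inv (peel n w pre)) p = peel_code n (lehmer (inv w)) (set pre) p)"
  using assms(3,4)
proof (induction pre arbitrary: rest rule: rev_induct)
  case Nil
  then show ?case using assms by (simp add: peel_def peel_code_def)
next
  case (snoc k pre)
  let ?c = "lehmer (inv w)"
  let ?D = "lehmer_supp n (inv w)"
  define x where "x = peel n w pre"
  have v: "cd_word n (pre @ (k # rest))" and sD: "set (pre @ (k # rest)) = ?D"
    using snoc.prems by simp_all
  have ax: "affine_perm n x"
    and lx: "aff_length n x + length pre = aff_length n w"
    and cx: "\<And>p. p < n \<Longrightarrow> lehmer (inv x) p = peel_code n ?c (set pre) p"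
    using snoc.IH[OF v sD] unfolding x_def by auto
  have n1: "n > 1" using assms by simp
  have kn: "k < n" and kpre: "k \<notin> set pre"
    and before: "\<forall>a\<in>set pre. \<forall>b\<in>set (k # rest). b \<noteq> Suc a mod n"
    and after: "\<forall>b\<in>set rest. b \<noteq> Suc k mod n"
    using v by (auto simp: cd_word_def sorted_wrt_append)
  have pk: "pred_mod n k \<notin> set pre"
    using before Suc_pred_mod[of n k] kn by fastforce
  have ck: "lehmer (inv x) k = ?c k" and ck0: "?c k > 0"
    using cx[OF kn] pk kpre sD by (auto simp: lehmer_supp_def peel_code_def)
  have csk: "lehmer (inv x) (Suc k mod n) = 0"
  proof (cases "Suc k mod n \<in> set pre")
    case True
    then show ?thesis using cx[of "Suc k mod n"] pred_mod_Suc_mod[OF kn] kpre n1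
      by (simp add: peel_code_def)
  next
    case False
    then have "Suc k mod n \<notin> set (pre @ (k # rest))" using Suc_mod_neq[OF n1 kn] after by auto
    then have "Suc k mod n \<notin> ?D" using sD by blast
    then show ?thesis using cx[of "Suc k mod n"] pred_mod_Suc_mod[OF kn] kpre False n1
      by (simp add: lehmer_supp_def peel_code_def)
  qed
  note step = peel_step[OF assms(1) ax kn, unfolded ck, OF ck0 csk]
  have "lehmer (inv (s_gen n k \<circ> x)) p = peel_code n ?c (set (pre @ [k])) p" if "p < n" for p
    using peel_code_insert[where c' = "lehmer (inv (s_gen n k \<circ> x))" and c = ?c,
        OF n1 kn that kpre pk step(2,3)] step(4) cx by simp
  moreover have "aff_length n (s_gen n k \<circ> x) + length (pre @ [k]) = aff_length n w"
    using step(1) lx by simp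
  ultimately show ?case
    using affine_perm_s_gen_comp[OF n1 ax] unfolding peel_snoc x_def[symmetric] by blast
qed

lemma peel_cd_word:
  assumes "n > 2" "affine_perm n w" "cd_word n ws"
    and "set ws = lehmer_supp n (inv w)"
  shows "affine_perm n (peel n w ws)" "word_prod n ws \<circ> peel n w ws = w"
    and "aff_length n (peel n w ws) + length ws = aff_length n w"
  using peel_prefix[OF assms(1,2), of ws "[]"] word_prod_comp_peel[of n ws w] assms by simp_all

section \<open>Conjugate partitions\<close>

definition conj_mset :: "nat multiset \<Rightarrow> nat list" where
  "conj_mset M = map (\<lambda>j. size (filter_mset (\<lambda>x. j \<le> x) M)) [1..<Suc (Max (insert 0 (set_mset M)))]"

lemma foldr_max_eq_Max: "foldr max ys (0::nat) = Max (insert 0 (set ys))"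
proof (induction ys)
  case Nil
  then show ?case by simp
next
  case (Cons a ys)
  have i: "insert 0 (set (a # ys)) = insert a (insert 0 (set ys))" by auto
  have "Max (insert a (insert 0 (set ys))) = max a (Max (insert 0 (set ys)))"
    by (rule Max_insert) auto
  then show ?case unfolding i using Cons by (simp only: foldr.simps comp_def)
qed

lemma Max_insert_0_in:
  "Max (insert (0::nat) (set_mset M)) > 0 \<Longrightarrow> Max (insert 0 (set_mset M)) \<in># M"
  using Max_in[of "insert 0 (set_mset M)"] by auto

lemma conj_part_rev_sort: "conj_part (rev (sort xs)) = conj_mset (mset xs)"
proof -
  have "length (filter P (rev (sort xs))) = size (filter_mset P (mset xs))" for P
  proof -
    have "size (mset (filter P (rev (sort xs)))) = size (filter_mset P (mset xs))" by simp
    then show ?thesis by (simp only: size_mset)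
  qed
  moreover have "foldr max (rev (sort xs)) 0 = Max (insert 0 (set_mset (mset xs)))"
    by (simp add: foldr_max_eq_Max)
  ultimately show ?thesis unfolding conj_part_def conj_mset_def by simp
qed

lemma sum_min_Suc: "sum_mset (image_mset (\<lambda>x. min x (Suc j)) M)
   = sum_mset (image_mset (\<lambda>x. min x j) M) + size (filter_mset (\<lambda>x. Suc j \<le> x) M)"
  by (induction M) auto

lemma length_conj_mset: "length (conj_mset M) = Max (insert 0 (set_mset M))"
  unfolding conj_mset_def by simp

lemma nth_conj_mset:
  "j < Max (insert 0 (set_mset M)) \<Longrightarrow> conj_mset M ! j = size (filter_mset (\<lambda>x. Suc j \<le> x) M)"
  unfolding conj_mset_def by (subst nth_map) (simp_all add: nth_upt del: upt_Suc)

lemma sum_take_conj_mset: "sum_list (take j (conj_mset M)) = sum_mset (image_mset (\<lambda>x. min x j) M)"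
proof (induction j)
  case 0
  then show ?case by simp
next
  case (Suc j)
  let ?m = "Max (insert 0 (set_mset M))"
  have sm: "sum_mset (image_mset (\<lambda>x. min x (Suc j)) M)
     = sum_mset (image_mset (\<lambda>x. min x j) M) + size (filter_mset (\<lambda>x. Suc j \<le> x) M)"
    by (rule sum_min_Suc)
  show ?case
  proof (cases "j < ?m")
    case True
    have "take (Suc j) (conj_mset M) = take j (conj_mset M) @ [conj_mset M ! j]"
      using True length_conj_mset[of M] by (simp add: take_Suc_conv_app_nth)
    then have "sum_list (take (Suc j) (conj_mset M)) = sum_list (take j (conj_mset M)) + conj_mset M ! j" by simp
    then show ?thesis using Suc.IH sm nth_conj_mset[OF True] by simp
  next
    case False
    have "filter_mset (\<lambda>x. Suc j \<le> x) M = {#}"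
    proof (rule filter_mset_eq_mempty_iff[THEN iffD2], intro allI impI)
      fix x assume "x \<in># M"
      then have "x \<le> ?m" by simp
      then show "\<not> Suc j \<le> x" using False by simp
    qed
    moreover have "take (Suc j) (conj_mset M) = take j (conj_mset M)"
    proof -
      have "length (conj_mset M) \<le> j" unfolding length_conj_mset using False by linarith
      then show ?thesis by (simp add: take_all)
    qed
    ultimately show ?thesis using Suc.IH sm by simp
  qed
qed

lemma zero_notin_conj_mset: "0 \<notin> set (conj_mset M)"
proof
  assume "0 \<in> set (conj_mset M)"
  then obtain j where j: "j < length (conj_mset M)" "conj_mset M ! j = 0" by (metis in_set_conv_nth)
  let ?m = "Max (insert 0 (set_mset M))"
  have jm: "j < ?m" using j length_conj_mset by simp
  have mp: "?m > 0" using jm by simp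
  have mM: "?m \<in># M" using Max_insert_0_in[OF mp] .
  have "?m \<in># filter_mset (\<lambda>x. Suc j \<le> x) M" using mM jm by simp
  then have "size (filter_mset (\<lambda>x. Suc j \<le> x) M) > 0" by (metis empty_iff set_mset_empty size_eq_0_iff_empty neq0_conv)
  then show False using j(2) nth_conj_mset[OF jm] by simp
qed

lemma conj_mset_zeros: "(\<forall>x\<in>#M. x = 0) \<Longrightarrow> conj_mset M = []"
proof -
  assume "\<forall>x\<in>#M. x = 0"
  then have e: "insert 0 (set_mset M) = {0}" by auto
  show ?thesis unfolding conj_mset_def e by simp
qed

lemma eq_of_partial_sums_eq:
  fixes a b :: "nat list"
  assumes "0 \<notin> set a" "0 \<notin> set b" "\<forall>j. sum_list (take j a) = sum_list (take j b)"
  shows "a = b"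
  using assms
proof (induction a arbitrary: b)
  case Nil
  show ?case
  proof (cases b)
    case (Cons y ys)
    then show ?thesis using Nil.prems(3)[rule_format, of 1] Nil.prems(2) by simp
  qed simp
next
  case (Cons x a)
  show ?case
  proof (cases b)
    case Nil
    then show ?thesis using Cons.prems(3)[rule_format, of 1] Cons.prems(1) by simp
  next
    case (Cons y ys)
    have xy: "x = y" using Cons.prems(3)[rule_format, of 1] Cons by simp
    have "\<forall>j. sum_list (take j a) = sum_list (take j ys)"
    proof
      fix j show "sum_list (take j a) = sum_list (take j ys)"
        using Cons.prems(3)[rule_format, of "Suc j"] Cons xy by simp
    qed
    then have "a = ys" using Cons.IH Cons.prems Cons by simp
    then show ?thesis using xy Cons by simp
  qed
qed

lemma conj_mset_Cons:
  assumes "\<exists>x\<in>#M. x > 0"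
  shows "conj_mset M = size (filter_mset (\<lambda>x. 1 \<le> x) M) # conj_mset (image_mset (\<lambda>x. x - 1) M)"
proof (rule eq_of_partial_sums_eq)
  have "filter_mset (\<lambda>x. 1 \<le> x) M \<noteq> {#}" using assms by (auto simp: filter_mset_eq_mempty_iff)
  then show "0 \<notin> set (size (filter_mset (\<lambda>x. 1 \<le> x) M) # conj_mset (image_mset (\<lambda>x. x - 1) M))"
    using zero_notin_conj_mset by simp
  have Suc: "sum_mset (image_mset (\<lambda>x. min x (Suc k)) M)
      = size (filter_mset (\<lambda>x. 1 \<le> x) M) + sum_mset (image_mset (\<lambda>x. min (x - 1) k) M)" for k
    by (induction M) auto
  show "\<forall>j. sum_list (take j (conj_mset M)) = sum_list (take j
      (size (filter_mset (\<lambda>x. 1 \<le> x) M) # conj_mset (image_mset (\<lambda>x. x - 1) M)))"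
  proof
    fix j
    show "sum_list (take j (conj_mset M)) = sum_list (take j
        (size (filter_mset (\<lambda>x. 1 \<le> x) M) # conj_mset (image_mset (\<lambda>x. x - 1) M)))"
      using Suc by (cases j) (simp_all add: sum_take_conj_mset image_mset.compositionality comp_def)
  qed
qed (rule zero_notin_conj_mset)

lemma part_prec_of_partial_sums_le:
  fixes a b :: "nat list"
  assumes "0 \<notin> set a" "0 \<notin> set b" "\<forall>j. sum_list (take j a) \<le> sum_list (take j b)"
  shows "part_prec a b"
proof (cases "a = b")
  case True
  then show ?thesis by (simp add: part_prec_def)
next
  case False
  then have "\<exists>j. sum_list (take j a) \<noteq> sum_list (take j b)" using eq_of_partial_sums_eq assms(1,2) by blast
  define k where "k = (LEAST j. sum_list (take j a) \<noteq> sum_list (take j b))"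
  have k1: "sum_list (take k a) \<noteq> sum_list (take k b)" unfolding k_def
    using LeastI_ex[OF \<open>\<exists>j. _\<close>] by simp
  have k2: "\<forall>j<k. sum_list (take j a) = sum_list (take j b)" unfolding k_def
    using not_less_Least by blast
  have "k > 0" using k1 by (cases k) auto
  moreover have "sum_list (take k a) < sum_list (take k b)" using k1 assms(3) le_neq_implies_less by blast
  ultimately show ?thesis unfolding part_prec_def using k2 by blast
qed


section \<open>Length-additive factorizations\<close>

definition lehmer_mset :: "nat \<Rightarrow> (int \<Rightarrow> int) \<Rightarrow> nat multiset" where
  "lehmer_mset n w = image_mset (lehmer (inv w)) (mset_set {..<n})"

lemma bij_betw_mod_window:
  assumes "n > 0"
  shows "bij_betw (\<lambda>i. i mod int n) {1..int n} (int ` {..<n})"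
proof (rule bij_betw_imageI)
  show "inj_on (\<lambda>i. i mod int n) {1..int n}"
  proof (rule inj_onI)
    fix x y assume "x \<in> {1..int n}" "y \<in> {1..int n}" "x mod int n = y mod int n"
    then show "x = y" by (cases "x = int n"; cases "y = int n") (auto simp: zmod_trivial_iff)
  qed
  show "(\<lambda>i. i mod int n) ` {1..int n} = int ` {..<n}"
  proof (rule set_eqI, rule iffI)
    fix x assume "x \<in> (\<lambda>i. i mod int n) ` {1..int n}"
    then have "0 \<le> x" "x < int n" using assms by auto
    then show "x \<in> int ` {..<n}" by (metis image_eqI lessThan_iff nat_less_iff int_nat_eq)
  next
    fix x assume "x \<in> int ` {..<n}"
    then obtain r where r: "r < n" "x = int r" by auto
    show "x \<in> (\<lambda>i. i mod int n) ` {1..int n}"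
    proof (cases "r = 0")
      case True
      then show ?thesis using r assms by (intro image_eqI[of _ _ "int n"]) auto
    next
      case False
      then show ?thesis using r by (intro image_eqI[of _ _ x]) auto
    qed
  qed
qed

lemma mset_aff_code:
  assumes "periodic_perm n u" "n > 0"
  shows "mset (aff_code n u) = image_mset (lehmer u) (mset_set {..<n})"
proof -
  have "mset (aff_code n u) = image_mset (inv_count u) (mset_set {1..int n})"
    unfolding aff_code_def inv_count_def by (simp add: mset_set_set[symmetric])
  also have "\<dots> = image_mset (\<lambda>i. inv_count u (i mod int n)) (mset_set {1..int n})"
    using inv_count_mod[OF assms(1)] by (intro image_mset_cong) auto
  also have "\<dots> = image_mset (inv_count u) (image_mset (\<lambda>i. i mod int n) (mset_set {1..int n}))"
    by (simp add: image_mset.compositionality comp_def)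
  also have "image_mset (\<lambda>i. i mod int n) (mset_set {1..int n}) = image_mset int (mset_set {..<n})"
    using bij_betw_mod_window[OF assms(2)]
    by (simp add: bij_betw_def image_mset_mset_set)
  finally show ?thesis by (simp add: image_mset.compositionality comp_def lehmer_def[abs_def])
qed

lemma lam_eq_conj_mset: "n > 0 \<Longrightarrow> affine_perm n w \<Longrightarrow> lam n w = conj_mset (lehmer_mset n w)"
  unfolding lam_def lehmer_mset_def conj_part_rev_sort
  using mset_aff_code[OF periodic_perm_inv_affine] by simp

definition factorization :: "nat \<Rightarrow> (int \<Rightarrow> int) \<Rightarrow> nat list \<Rightarrow> (int \<Rightarrow> int) list \<Rightarrow> bool" where
  "factorization n w \<alpha> vs \<longleftrightarrow> length vs = length \<alpha> \<and>
     (\<forall>i<length vs. cyc_dec n (vs ! i) \<and> aff_length n (vs ! i) = \<alpha> ! i) \<and>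
     foldr (\<circ>) vs id = w \<and> (\<Sum>v\<leftarrow>vs. aff_length n v) = aff_length n w"

lemma m_coeff_eq_card: "m_coeff n w \<alpha> = card {vs. factorization n w \<alpha> vs}"
  unfolding m_coeff_def aff_stanley_monomial_coeff_def factorization_def by simp

lemma factorization_Nil: "factorization n w [] vs \<longleftrightarrow> vs = [] \<and> w = id"
  unfolding factorization_def using aff_length_id[of n] by auto

lemma affine_perm_cyc_dec_comp:
  assumes "n > 1" "cyc_dec n v" "affine_perm n y"
  shows "affine_perm n (v \<circ> y)"
proof -
  obtain ws where "word_prod n ws = v" using cyc_dec_cd_word[OF assms(2)] by blast
  then show ?thesis using affine_perm_word_prod_comp[OF assms(1,3), of ws] by simp
qed

lemma affine_perm_foldr_cyc_dec:
  "n > 1 \<Longrightarrow> \<forall>v\<in>set vs. cyc_dec n v \<Longrightarrow> affine_perm n (foldr (\<circ>) vs id)"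
  by (induction vs) (auto simp: affine_perm_id affine_perm_cyc_dec_comp)

lemma aff_length_foldr_le:
  assumes "n > 2" "\<forall>v\<in>set vs. cyc_dec n v"
  shows "aff_length n (foldr (\<circ>) vs id) \<le> (\<Sum>v\<leftarrow>vs. aff_length n v)"
  using assms(2)
proof (induction vs)
  case Nil
  show ?case using aff_length_id[of n] by (simp add: id_def)
next
  case (Cons v vs)
  have "affine_perm n v" using affine_perm_cyc_dec Cons.prems assms(1) by simp
  moreover have "affine_perm n (foldr (\<circ>) vs id)" using affine_perm_foldr_cyc_dec Cons.prems assms(1) by simp
  ultimately have "aff_length n (v \<circ> foldr (\<circ>) vs id) \<le> aff_length n v + aff_length n (foldr (\<circ>) vs id)"
    by (rule aff_length_comp_le[OF assms(1)])
  moreover have "aff_length n (foldr (\<circ>) vs id) \<le> (\<Sum>v\<leftarrow>vs. aff_length n v)"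
    using Cons.prems by (intro Cons.IH) simp
  moreover have "foldr (\<circ>) (v # vs) id = v \<circ> foldr (\<circ>) vs id" by simp
  ultimately show ?case by (simp only: sum_list.Cons list.map)
qed

lemma factorization_Cons_iff:
  assumes "n > 2"
  shows "factorization n w (a # \<alpha>) vs \<longleftrightarrow> (\<exists>v r y. vs = v # r \<and> cyc_dec n v \<and> aff_length n v = a
     \<and> factorization n y \<alpha> r \<and> w = v \<circ> y \<and> aff_length n w = aff_length n v + aff_length n y)"
    (is "?lhs \<longleftrightarrow> ?rhs")
proof
  assume f: ?lhs
  then obtain v r where vs: "vs = v # r" by (cases vs) (auto simp: factorization_def)
  let ?y = "foldr (\<circ>) r id"
  have len: "length r = length \<alpha>" using f vs unfolding factorization_def by simp
  have w: "w = v \<circ> ?y" using f vs unfolding factorization_def by simp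
  have sum: "aff_length n v + (\<Sum>u\<leftarrow>r. aff_length n u) = aff_length n w"
    using f vs unfolding factorization_def by simp
  have all: "\<forall>i<length vs. cyc_dec n (vs ! i) \<and> aff_length n (vs ! i) = (a # \<alpha>) ! i"
    using f unfolding factorization_def by blast
  have cv: "cyc_dec n v" "aff_length n v = a" using all[rule_format, of 0] vs by auto
  have all': "\<forall>i<length r. cyc_dec n (r ! i) \<and> aff_length n (r ! i) = \<alpha> ! i"
    using all vs by auto
  have cr: "\<forall>u\<in>set r. cyc_dec n u" using all' by (metis in_set_conv_nth)
  have n1: "n > 1" using assms by simp
  have "aff_length n ?y \<le> (\<Sum>u\<leftarrow>r. aff_length n u)" using aff_length_foldr_le[OF assms cr] .
  moreover have "aff_length n w \<le> aff_length n v + aff_length n ?y"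
    using aff_length_comp_le[OF assms affine_perm_cyc_dec[OF n1 cv(1)] affine_perm_foldr_cyc_dec[OF n1 cr]] w
    by simp
  ultimately have "aff_length n ?y = (\<Sum>u\<leftarrow>r. aff_length n u)"
    and e: "aff_length n w = aff_length n v + aff_length n ?y" using sum by linarith+
  then have "factorization n ?y \<alpha> r" unfolding factorization_def using len all' by simp
  then show ?rhs using vs cv w e by blast
next
  assume ?rhs
  then obtain v r y where "vs = v # r" "cyc_dec n v" "aff_length n v = a" "factorization n y \<alpha> r"
    "w = v \<circ> y" "aff_length n w = aff_length n v + aff_length n y" by blast
  then show ?lhs unfolding factorization_def by (auto simp: nth_Cons split: nat.splits)
qed

lemma affine_perm_factorization: "n > 1 \<Longrightarrow> factorization n w \<alpha> vs \<Longrightarrow> affine_perm n w"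
  unfolding factorization_def by (metis affine_perm_foldr_cyc_dec in_set_conv_nth)

definition trunc_sum :: "nat \<Rightarrow> (int \<Rightarrow> int) \<Rightarrow> nat \<Rightarrow> nat" where
  "trunc_sum n w j = (\<Sum>p<n. min (lehmer (inv w) p) j)"

lemma sum_take_lam:
  "n > 0 \<Longrightarrow> affine_perm n w \<Longrightarrow> sum_list (take j (lam n w)) = trunc_sum n w j"
  by (simp add: lam_eq_conj_mset sum_take_conj_mset lehmer_mset_def trunc_sum_def
      image_mset.compositionality comp_def sum_unfold_sum_mset)

lemma trunc_sum_cyc_dec_comp:
  assumes "n > 2" "cyc_dec n v" "affine_perm n y"
    and "aff_length n (v \<circ> y) = aff_length n v + aff_length n y"
  shows "trunc_sum n y j + aff_length n v \<le> trunc_sum n (v \<circ> y) (Suc j)"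
proof -
  obtain ws where ws: "cd_word n ws" "word_prod n ws = v" "length ws = aff_length n v"
    using cyc_dec_cd_word[OF assms(2)] by blast
  obtain g where g: "\<forall>p<n. lehmer (inv (v \<circ> y)) p = g p + of_bool (p \<in> set ws)"
    "image_mset g (mset_set {..<n}) = image_mset (lehmer (inv y)) (mset_set {..<n})"
    using lehmer_cd_word_comp[OF assms(1) ws(1) assms(3)] assms(4) ws(2,3) by auto
  have "trunc_sum n y j = (\<Sum>p<n. min (g p) j)"
    using arg_cong[OF g(2), of "\<lambda>M. sum_mset (image_mset (\<lambda>x. min x j) M)"]
    by (simp add: trunc_sum_def image_mset.compositionality comp_def sum_unfold_sum_mset)
  moreover have "aff_length n v = (\<Sum>p<n. of_bool (p \<in> set ws))"
    using ws(1,3) by (auto simp: cd_word_def distinct_card Int_absorb1)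
  moreover have "(\<Sum>p<n. min (g p) j) + (\<Sum>p<n. of_bool (p \<in> set ws))
      \<le> (\<Sum>p<n. min (g p + of_bool (p \<in> set ws)) (Suc j))"
    unfolding sum.distrib[symmetric] by (intro sum_mono) auto
  moreover have "(\<Sum>p<n. min (g p + of_bool (p \<in> set ws)) (Suc j)) = trunc_sum n (v \<circ> y) (Suc j)"
    unfolding trunc_sum_def using g(1) by (intro sum.cong) auto
  ultimately show ?thesis by linarith
qed

lemma partial_sum_le_trunc_sum:
  assumes "n > 2" "factorization n w \<alpha> vs"
  shows "sum_list (take j \<alpha>) \<le> trunc_sum n w j"
  using assms(2)
proof (induction \<alpha> arbitrary: vs w j)
  case Nil
  then show ?case by simp
next
  case (Cons a \<alpha>)
  obtain v r y where f: "cyc_dec n v" "aff_length n v = a" "factorization n y \<alpha> r" "w = v \<circ> y"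
    "aff_length n w = aff_length n v + aff_length n y"
    using Cons.prems factorization_Cons_iff[OF assms(1)] by blast
  have ay: "affine_perm n y" using affine_perm_factorization[OF _ f(3)] assms(1) by simp
  show ?case
  proof (cases j)
    case 0
    then show ?thesis by simp
  next
    case (Suc k)
    have "sum_list (take j (a # \<alpha>)) = a + sum_list (take k \<alpha>)" using Suc by simp
    also have "\<dots> \<le> aff_length n v + trunc_sum n y k" using Cons.IH[OF f(3)] f(2) by simp
    also have "\<dots> \<le> trunc_sum n w j"
      using trunc_sum_cyc_dec_comp[OF assms(1) f(1) ay, of k] f(4,5) Suc by simp
    finally show ?thesis .
  qed
qed

lemma factorization_dominated:
  assumes "n > 2" "affine_perm n w" "is_partition \<alpha>" "factorization n w \<alpha> vs"
  shows "part_prec \<alpha> (lam n w)"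
proof (rule part_prec_of_partial_sums_le)
  show "0 \<notin> set \<alpha>" using assms(3) is_partition_def by simp
  show "0 \<notin> set (lam n w)" using lam_eq_conj_mset[OF _ assms(2)] assms(1) zero_notin_conj_mset by simp
  show "\<forall>j. sum_list (take j \<alpha>) \<le> sum_list (take j (lam n w))"
    using partial_sum_le_trunc_sum[OF assms(1,4)] sum_take_lam[OF _ assms(2)] assms(1) by simp
qed

lemma lehmer_supp_empty_eq_id:
  assumes "n > 2" "affine_perm n w" "lehmer_supp n (inv w) = {}"
  shows "w = id"
proof -
  have "lehmer_sum n (inv w) = 0"
    using assms(3) unfolding lehmer_sum_def lehmer_supp_def by (intro sum.neutral) auto
  then show ?thesis using word_of_lehmer_sum[OF assms(1,2)] by (auto simp: word_prod_Nil)
qed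

lemma lehmer_supp_cd_word_comp:
  assumes "n > 2" "cd_word n ws" "affine_perm n y"
    and "aff_length n (word_prod n ws \<circ> y) = aff_length n y + length ws"
    and "length ws = card (lehmer_supp n (inv (word_prod n ws \<circ> y)))"
  shows "set ws = lehmer_supp n (inv (word_prod n ws \<circ> y))"
proof -
  obtain g where "\<forall>p<n. lehmer (inv (word_prod n ws \<circ> y)) p = g p + of_bool (p \<in> set ws)"
    using lehmer_cd_word_comp[OF assms(1-4)] by blast
  then have "set ws \<subseteq> lehmer_supp n (inv (word_prod n ws \<circ> y))"
    using assms(2) by (auto simp: lehmer_supp_def cd_word_def)
  moreover have "card (set ws) = card (lehmer_supp n (inv (word_prod n ws \<circ> y)))"
    using assms(2,5) by (simp add: cd_word_def distinct_card)
  ultimately show ?thesis by (intro card_subset_eq) (auto simp: lehmer_supp_def)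
qed

lemma lehmer_mset_cd_word_comp:
  assumes "n > 2" "cd_word n ws" "affine_perm n y"
    and "aff_length n (word_prod n ws \<circ> y) = aff_length n y + length ws"
    and "set ws = lehmer_supp n (inv (word_prod n ws \<circ> y))"
  shows "lehmer_mset n y = image_mset (\<lambda>x. x - 1) (lehmer_mset n (word_prod n ws \<circ> y))"
proof -
  let ?c = "lehmer (inv (word_prod n ws \<circ> y))"
  obtain g where g: "\<forall>p<n. ?c p = g p + of_bool (p \<in> set ws)"
    "image_mset g (mset_set {..<n}) = image_mset (lehmer (inv y)) (mset_set {..<n})"
    using lehmer_cd_word_comp[OF assms(1-4)] by blast
  have "g p = ?c p - 1" if "p < n" for p
    using g(1) that assms(5) by (cases "p \<in> set ws") (auto simp: lehmer_supp_def)
  then have "image_mset g (mset_set {..<n}) = image_mset (\<lambda>p. ?c p - 1) (mset_set {..<n})"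
    by (intro image_mset_cong) auto
  then show ?thesis using g(2) by (simp add: lehmer_mset_def image_mset.compositionality comp_def)
qed

lemma peel_lehmer_supp:
  assumes "n > 2" "affine_perm n w"
  obtains ws y where "cd_word n ws" "set ws = lehmer_supp n (inv w)" "affine_perm n y"
    "w = word_prod n ws \<circ> y" "aff_length n w = aff_length n y + length ws"
proof -
  obtain z where z: "z < n" "lehmer (inv w) z = 0"
    using lehmer_has_zero[OF _ periodic_perm_inv_affine[OF assms(2)]] assms(1) by auto
  define ws where "ws = cd_list n z (lehmer_supp n (inv w))"
  have ws: "cd_word n ws" "set ws = lehmer_supp n (inv w)"
    using cd_list_cd_word[OF z(1), of "lehmer_supp n (inv w)"] z by (auto simp: ws_def lehmer_supp_def)
  show ?thesis
    using that[OF ws peel_cd_word(1)[OF assms ws] peel_cd_word(2)[OF assms ws, symmetric]]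
      peel_cd_word(3)[OF assms ws] by simp
qed

lemma lam_cd_word_comp:
  assumes "n > 2" "cd_word n ws" "ws \<noteq> []" "affine_perm n y"
    and "aff_length n (word_prod n ws \<circ> y) = aff_length n y + length ws"
    and "set ws = lehmer_supp n (inv (word_prod n ws \<circ> y))"
  shows "lam n (word_prod n ws \<circ> y) = length ws # lam n y"
proof -
  let ?w = "word_prod n ws \<circ> y"
  let ?c = "lehmer (inv ?w)"
  have n0: "n > 0" and n1: "n > 1" using assms(1) by simp_all
  have "card (set ws) = length ws" using assms(2) by (simp add: cd_word_def distinct_card)
  then have card: "card (lehmer_supp n (inv ?w)) = length ws" using assms(6) by simp
  have pos: "\<exists>x\<in>#lehmer_mset n ?w. x > 0"
  proof -
    obtain p where "p \<in> set ws" using assms(3) by (metis list.set_intros(1) neq_Nil_conv)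
    then have "p < n" "?c p > 0" using assms(6) by (auto simp: lehmer_supp_def)
    then show ?thesis by (auto simp: lehmer_mset_def)
  qed
  have "size (filter_mset (\<lambda>x. 1 \<le> x) (lehmer_mset n ?w))
      = size (filter_mset (\<lambda>p. 1 \<le> ?c p) (mset_set {..<n}))"
    by (simp add: lehmer_mset_def filter_mset_image_mset)
  also have "\<dots> = card {p \<in> {..<n}. 1 \<le> ?c p}" by simp
  also have "{p \<in> {..<n}. 1 \<le> ?c p} = lehmer_supp n (inv ?w)" by (auto simp: lehmer_supp_def)
  finally have size: "size (filter_mset (\<lambda>x. 1 \<le> x) (lehmer_mset n ?w)) = length ws"
    unfolding card .
  have "lam n ?w = conj_mset (lehmer_mset n ?w)"
    by (rule lam_eq_conj_mset[OF n0 affine_perm_word_prod_comp[OF n1 assms(4)]])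
  also have "\<dots> = length ws # conj_mset (lehmer_mset n y)"
    unfolding conj_mset_Cons[OF pos] size lehmer_mset_cd_word_comp[OF assms(1,2,4,5,6)] ..
  finally show ?thesis unfolding lam_eq_conj_mset[OF n0 assms(4)] .
qed

text \<open>The first factor is forced: its letters raise distinct nonzero code entries and are as many
  as there are such entries, so they are the support of the code, which determines it.\<close>

lemma cd_word_first_factor_unique:
  assumes "n > 2" "cd_word n ws" "cyc_dec n v" "affine_perm n y1"
    and "set ws = lehmer_supp n (inv (v \<circ> y1))" "aff_length n v = length ws"
    and "aff_length n (v \<circ> y1) = aff_length n v + aff_length n y1"
  shows "v = word_prod n ws"
proof -
  obtain ws1 where ws1: "cd_word n ws1" "word_prod n ws1 = v" "length ws1 = aff_length n v"
    using cyc_dec_cd_word[OF assms(3)] by blast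
  have "card (set ws) = length ws" using assms(2) by (simp add: cd_word_def distinct_card)
  then have "set ws1 = lehmer_supp n (inv (word_prod n ws1 \<circ> y1))"
    using assms(5-7) ws1(2,3) by (intro lehmer_supp_cd_word_comp[OF assms(1) ws1(1) assms(4)]) simp_all
  then have "set ws1 = set ws" using ws1(2) assms(5) by simp
  then show ?thesis using cd_word_set_determines[OF assms(1) ws1(1) assms(2)] ws1(2) by simp
qed

lemma factorization_lam_iff:
  assumes "n > 2" "cd_word n ws" "ws \<noteq> []" "affine_perm n y"
    and "aff_length n (word_prod n ws \<circ> y) = aff_length n y + length ws"
    and "set ws = lehmer_supp n (inv (word_prod n ws \<circ> y))"
  shows "factorization n (word_prod n ws \<circ> y) (lam n (word_prod n ws \<circ> y)) vs
     \<longleftrightarrow> (\<exists>r. vs = word_prod n ws # r \<and> factorization n y (lam n y) r)"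
proof -
  let ?V = "word_prod n ws"
  let ?w = "?V \<circ> y"
  have n1: "n > 1" using assms(1) by simp
  have lam: "lam n ?w = length ws # lam n y" using lam_cd_word_comp[OF assms] .
  have "aff_length n ?V \<le> length ws" using assms(2) by (intro aff_length_le) (auto simp: cd_word_def)
  moreover have "aff_length n ?w \<le> aff_length n ?V + aff_length n y"
    using aff_length_comp_le[OF assms(1) affine_perm_word_prod[OF n1] assms(4)] .
  ultimately have lV: "aff_length n ?V = length ws" using assms(5) by linarith
  show ?thesis
  proof
    assume "factorization n ?w (lam n ?w) vs"
    then have "\<exists>v r y1. vs = v # r \<and> cyc_dec n v \<and> aff_length n v = length ws
      \<and> factorization n y1 (lam n y) r \<and> ?w = v \<circ> y1 \<and> aff_length n ?w = aff_length n v + aff_length n y1"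
      unfolding lam factorization_Cons_iff[OF assms(1)] .
    then obtain v r y1 where f: "vs = v # r" "cyc_dec n v" "aff_length n v = length ws"
      "factorization n y1 (lam n y) r" "?w = v \<circ> y1" "aff_length n ?w = aff_length n v + aff_length n y1"
      by (elim exE conjE)
    have v: "v = ?V"
      using cd_word_first_factor_unique[OF assms(1,2) f(2) affine_perm_factorization[OF n1 f(4)]]
        assms(6) f(3,5,6) by simp
    have "inj ?V" using affine_perm_word_prod[OF n1] by (simp add: affine_perm_def bij_is_inj)
    then have "y1 = y" using f(5) unfolding v by (simp add: fun_eq_iff inj_eq)
    then show "\<exists>r. vs = ?V # r \<and> factorization n y (lam n y) r" using f(1,4) v by blast
  next
    assume "\<exists>r. vs = ?V # r \<and> factorization n y (lam n y) r"
    then obtain r where r: "vs = ?V # r" "factorization n y (lam n y) r" by blast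
    have "cyc_dec n ?V" using cd_word_cyc_dec[OF n1 assms(2) refl lV] .
    then have "\<exists>v r y1. vs = v # r \<and> cyc_dec n v \<and> aff_length n v = length ws
      \<and> factorization n y1 (lam n y) r \<and> ?w = v \<circ> y1 \<and> aff_length n ?w = aff_length n v + aff_length n y1"
      using r lV assms(5) by (intro exI[of _ ?V] exI[of _ r] exI[of _ y]) simp
    then show "factorization n ?w (lam n ?w) vs"
      unfolding lam factorization_Cons_iff[OF assms(1)] .
  qed
qed

lemma lam_factorization_unique:
  assumes "n > 2" "affine_perm n w"
  shows "\<exists>!vs. factorization n w (lam n w) vs"
  using assms(2)
proof (induction "aff_length n w" arbitrary: w rule: less_induct)
  case less
  obtain ws y where p: "cd_word n ws" "set ws = lehmer_supp n (inv w)" "affine_perm n y"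
    "w = word_prod n ws \<circ> y" "aff_length n w = aff_length n y + length ws"
    using peel_lehmer_supp[OF assms(1) less.prems] by blast
  show ?case
  proof (cases "ws = []")
    case True
    then have "w = id" using lehmer_supp_empty_eq_id[OF assms(1) less.prems] p(2) by simp
    moreover have "lam n w = []"
      using True p(2) lam_eq_conj_mset[OF _ less.prems] assms(1) conj_mset_zeros
      by (auto simp: lehmer_mset_def lehmer_supp_def)
    ultimately show ?thesis using factorization_Nil by auto
  next
    case False
    then have "\<exists>!r. factorization n y (lam n y) r" using less.hyps[OF _ p(3)] p(5) by simp
    then obtain r where r: "factorization n y (lam n y) r"
      "\<And>r'. factorization n y (lam n y) r' \<Longrightarrow> r' = r" by blast
    note iff = factorization_lam_iff[OF assms(1) p(1) False p(3) p(5)[unfolded p(4)]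
        p(2)[unfolded p(4)], folded p(4)]
    show ?thesis
    proof (rule ex1I[of _ "word_prod n ws # r"])
      show "factorization n w (lam n w) (word_prod n ws # r)" using iff r(1) by blast
    next
      fix vs assume "factorization n w (lam n w) vs"
      then show "vs = word_prod n ws # r" using iff r(2) by blast
    qed
  qed
qed

theorem proposition3p4:
  fixes n :: nat and w :: "int \<Rightarrow> int"
  assumes "n > 2" and "affine_perm n w"
  shows "(\<forall>la. is_partition la \<and> m_coeff n w la \<noteq> 0 \<longrightarrow> part_prec la (lam n w))
         \<and> m_coeff n w (lam n w) = 1"
proof
  show "\<forall>la. is_partition la \<and> m_coeff n w la \<noteq> 0 \<longrightarrow> part_prec la (lam n w)"
    using factorization_dominated[OF assms] unfolding m_coeff_eq_card by (metis card.empty empty_Collect_eq)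
  obtain vs where "{vs. factorization n w (lam n w) vs} = {vs}"
    using lam_factorization_unique[OF assms] by blast
  then show "m_coeff n w (lam n w) = 1" unfolding m_coeff_eq_card by simp
qed

end
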